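(* Let $k\ge0$ be an integer, $\rho\in\mathbb R$, and let $\kappa_{\mathbf a}$ be a positive semi-definite $k$-diagonal Dirichlet series kernel on $\mathbb H_\rho$ with coefficient matrix $\mathbf a=(a_{m,n})$. Then for every integer $n\ge1$ the analytic symbol $A_{n,\mathbf a}(s)=\sum_{m\ge1}a_{m,n}m^{-s}$ is a Dirichlet polynomial, and $\mathscr H_{\mathbf a}$ admits an orthonormal basis consisting of Dirichlet polynomials. In addition, if $\mathscr H_{\mathbf a}$ contains the space $\mathcal D[s]$ of all Dirichlet polynomials, then $\mathcal D[s]$ is dense in $\mathscr H_{\mathbf a}$.
   Context: $\mathbb H_\rho=\{\Re s>\rho\}$. $\kappa_{\mathbf a}(s,u)=\sum_{m,n\ge1}a_{m,n}m^{-s}n^{-\bar u}$ is a Dirichlet series kernel on $\mathbb H_\rho$ if $(s,u)\mapsto\kappa_{\mathbf a}(s,\bar u)$ is regularly convergent on $\mathbb H_\rho\times\mathbb H_\rho$ (the double series converges at each point and every row series and column series converges there). It is $k$-diagonal if $a_{m,n}=0$ whenever $|m-n|>k$. Positive semi-definite: all finite matrices $(\kappa_{\mathbf a}(s_i,s_j))$ are positive semi-definite. $\mathscr H_{\mathbf a}$ is the reproducing kernel Hilbert space on $\mathbb H_\rho$ with kernel $\kappa_{\mathbf a}$. A Dirichlet polynomial is a finite sum $\sum_{n=1}^Nc_nn^{-s}$. *)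

theory Defs
  imports "HOL-Analysis.Analysis"
begin

definition halfplane :: "real \<Rightarrow> complex set" where
  "halfplane \<rho> = {s. Re s > \<rho>}"

definition npow :: "nat \<Rightarrow> complex \<Rightarrow> complex" where
  "npow n s = of_nat n powr (- s)"

definition dpsum :: "(nat \<Rightarrow> nat \<Rightarrow> complex) \<Rightarrow> complex \<Rightarrow> complex \<Rightarrow> nat \<times> nat \<Rightarrow> complex" where
  "dpsum a s u = (\<lambda>(M, N). \<Sum>m=1..M. \<Sum>n=1..N. a m n * npow m s * npow n u)"

text \<open>Regular convergence of the double series at (s,u): the double series converges
  (rectangular partial sums converge as M,N \<rightarrow> \<infinity> jointly, i.e. in Pringsheim's sense),
  and every row series and every column series converges.\<close>
definition regularly_convergent_at ::
    "(nat \<Rightarrow> nat \<Rightarrow> complex) \<Rightarrow> complex \<Rightarrow> complex \<Rightarrow> bool" where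
  "regularly_convergent_at a s u \<longleftrightarrow>
     (\<exists>L. (dpsum a s u \<longlongrightarrow> L) (sequentially \<times>\<^sub>F sequentially)) \<and>
     (\<forall>m\<ge>1. convergent (\<lambda>N. \<Sum>n=1..N. a m n * npow m s * npow n u)) \<and>
     (\<forall>n\<ge>1. convergent (\<lambda>M. \<Sum>m=1..M. a m n * npow m s * npow n u))"

definition dkernel :: "(nat \<Rightarrow> nat \<Rightarrow> complex) \<Rightarrow> complex \<Rightarrow> complex \<Rightarrow> complex" where
  "dkernel a s u = Lim (sequentially \<times>\<^sub>F sequentially) (dpsum a s (cnj u))"

text \<open>kappa_a is a Dirichlet series kernel on H_rho: (s,u) \<mapsto> kappa_a(s, conj u)
  is regularly convergent on H_rho \<times> H_rho.\<close>
definition dirichlet_series_kernel :: "real \<Rightarrow> (nat \<Rightarrow> nat \<Rightarrow> complex) \<Rightarrow> bool" where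
  "dirichlet_series_kernel \<rho> a \<longleftrightarrow>
     (\<forall>s\<in>halfplane \<rho>. \<forall>u\<in>halfplane \<rho>. regularly_convergent_at a s u)"

definition k_diagonal :: "nat \<Rightarrow> (nat \<Rightarrow> nat \<Rightarrow> complex) \<Rightarrow> bool" where
  "k_diagonal k a \<longleftrightarrow> (\<forall>m n. \<bar>int m - int n\<bar> > int k \<longrightarrow> a m n = 0)"

definition psd_kernel :: "'a set \<Rightarrow> ('a \<Rightarrow> 'a \<Rightarrow> complex) \<Rightarrow> bool" where
  "psd_kernel \<Omega> K \<longleftrightarrow>
     (\<forall>(n::nat) (x::nat \<Rightarrow> 'a) (c::nat \<Rightarrow> complex). (\<forall>i<n. x i \<in> \<Omega>) \<longrightarrow>
        (let q = (\<Sum>i<n. \<Sum>j<n. cnj (c i) * c j * K (x i) (x j)) in Im q = 0 \<and> Re q \<ge> 0))"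

definition symbol :: "(nat \<Rightarrow> nat \<Rightarrow> complex) \<Rightarrow> nat \<Rightarrow> complex \<Rightarrow> complex" where
  "symbol a n s = (\<Sum>m. a (Suc m) n * npow (Suc m) s)"

definition dirichlet_poly_on :: "complex set \<Rightarrow> (complex \<Rightarrow> complex) \<Rightarrow> bool" where
  "dirichlet_poly_on \<Omega> f \<longleftrightarrow>
     (\<exists>N (c::nat \<Rightarrow> complex). \<forall>s\<in>\<Omega>. f s = (\<Sum>n=1..N. c n * npow n s))"

text \<open>Reproducing kernel Hilbert space of functions on \<Omega> (represented as functions
  vanishing outside \<Omega>) with inner product ip (linear in the first argument) and
  reproducing kernel K: f(w) = ip f K_w with K_w = K(.,w).\<close>
definition ipnorm :: "(('a \<Rightarrow> complex) \<Rightarrow> ('a \<Rightarrow> complex) \<Rightarrow> complex) \<Rightarrow> ('a \<Rightarrow> complex) \<Rightarrow> real" where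
  "ipnorm ip f = sqrt (Re (ip f f))"

definition kfun :: "'a set \<Rightarrow> ('a \<Rightarrow> 'a \<Rightarrow> complex) \<Rightarrow> 'a \<Rightarrow> 'a \<Rightarrow> complex" where
  "kfun \<Omega> K w = (\<lambda>s. if s \<in> \<Omega> then K s w else 0)"

definition rkhs :: "'a set \<Rightarrow> ('a \<Rightarrow> complex) set \<Rightarrow>
    (('a \<Rightarrow> complex) \<Rightarrow> ('a \<Rightarrow> complex) \<Rightarrow> complex) \<Rightarrow> ('a \<Rightarrow> 'a \<Rightarrow> complex) \<Rightarrow> bool" where
  "rkhs \<Omega> H ip K \<longleftrightarrow>
     (\<forall>f\<in>H. \<forall>x. x \<notin> \<Omega> \<longrightarrow> f x = 0) \<and>
     (\<lambda>x. 0) \<in> H \<and> (\<forall>f\<in>H. \<forall>g\<in>H. (\<lambda>x. f x + g x) \<in> H) \<and> (\<forall>f\<in>H. \<forall>c::complex. (\<lambda>x. c * f x) \<in> H) \<and>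
     (\<forall>f\<in>H. \<forall>g\<in>H. \<forall>h\<in>H. ip (\<lambda>x. f x + g x) h = ip f h + ip g h) \<and>
     (\<forall>f\<in>H. \<forall>g\<in>H. \<forall>c. ip (\<lambda>x. c * f x) g = c * ip f g) \<and>
     (\<forall>f\<in>H. \<forall>g\<in>H. ip f g = cnj (ip g f)) \<and>
     (\<forall>f\<in>H. Im (ip f f) = 0 \<and> Re (ip f f) \<ge> 0) \<and>
     (\<forall>f\<in>H. ip f f = 0 \<longrightarrow> f = (\<lambda>x. 0)) \<and>
     (\<forall>F. (\<forall>n. F n \<in> H) \<longrightarrow>
        (\<forall>e>0. \<exists>N. \<forall>m\<ge>N. \<forall>n\<ge>N. ipnorm ip (\<lambda>x. F m x - F n x) < e) \<longrightarrow>
        (\<exists>g\<in>H. (\<lambda>n. ipnorm ip (\<lambda>x. F n x - g x)) \<longlonglongrightarrow> 0)) \<and>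
     (\<forall>w\<in>\<Omega>. kfun \<Omega> K w \<in> H \<and> (\<forall>f\<in>H. f w = ip f (kfun \<Omega> K w)))"

definition fspan :: "('a \<Rightarrow> complex) set \<Rightarrow> ('a \<Rightarrow> complex) set" where
  "fspan B = {g. \<exists>S c. finite S \<and> S \<subseteq> B \<and> g = (\<lambda>x. \<Sum>e\<in>S. c e * e x)}"

definition orthonormal_basis :: "('a \<Rightarrow> complex) set \<Rightarrow>
    (('a \<Rightarrow> complex) \<Rightarrow> ('a \<Rightarrow> complex) \<Rightarrow> complex) \<Rightarrow> ('a \<Rightarrow> complex) set \<Rightarrow> bool" where
  "orthonormal_basis H ip B \<longleftrightarrow>
     B \<subseteq> H \<and> (\<forall>e\<in>B. ip e e = 1) \<and> (\<forall>e\<in>B. \<forall>e'\<in>B. e \<noteq> e' \<longrightarrow> ip e e' = 0) \<and>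
     (\<forall>f\<in>H. \<forall>\<epsilon>>0. \<exists>g\<in>fspan B. ipnorm ip (\<lambda>x. f x - g x) < \<epsilon>)"

end

theory Submission
  imports Defs
begin

(* Bandedness makes every symbol A_n = sum_m a(m,n) m^-s a Dirichlet polynomial with at most
   2k+1 terms, and the kernel splits as K(s,u) = sum_n A_n(s) n^-conj(u). At real points
   tau -> infinity the term n^-tau dominates sum_{p>=n} p^-tau A_p, so
   n^tau (K_tau - sum_{i<n} i^-tau A_i) tends to A_n pointwise. Its inner products are again
   tails of double Dirichlet series, and since the coefficients grow at most polynomially
   (the double series converges) they converge as well; so the sequence is Cauchy in H,
   A_n lies in H, and <A_i, A_j> = a(j,i), by induction on n. Then sum_{n<=N} conj(n^-w) A_n tends to the kernel
   function K_w, so the A_n span a dense subspace, and Gram-Schmidt turns them into an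
   orthonormal basis of Dirichlet polynomials. Its finite linear combinations are Dirichlet
   polynomials, which gives the density statement without the inclusion hypothesis. *)

section \<open>Reproducing kernel Hilbert spaces\<close>

locale rkhs_space =
  fixes \<Omega> :: "'a set" and H :: "('a \<Rightarrow> complex) set"
    and ip :: "('a \<Rightarrow> complex) \<Rightarrow> ('a \<Rightarrow> complex) \<Rightarrow> complex" and K :: "'a \<Rightarrow> 'a \<Rightarrow> complex"
  assumes rkhs: "rkhs \<Omega> H ip K"
begin

abbreviation dist_H :: "('a \<Rightarrow> complex) \<Rightarrow> ('a \<Rightarrow> complex) \<Rightarrow> real" where
  "dist_H f g \<equiv> ipnorm ip (\<lambda>x. f x - g x)"

lemma vanishes_outside: "f \<in> H \<Longrightarrow> x \<notin> \<Omega> \<Longrightarrow> f x = 0"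
  using rkhs unfolding rkhs_def by blast

lemma zero_mem: "(\<lambda>x. 0) \<in> H"
  using rkhs unfolding rkhs_def by blast

lemma add_mem: "f \<in> H \<Longrightarrow> g \<in> H \<Longrightarrow> (\<lambda>x. f x + g x) \<in> H"
  using rkhs unfolding rkhs_def by blast

lemma scale_mem: "f \<in> H \<Longrightarrow> (\<lambda>x. c * f x) \<in> H"
  using rkhs unfolding rkhs_def by blast

lemma ip_add_left: "f \<in> H \<Longrightarrow> g \<in> H \<Longrightarrow> h \<in> H \<Longrightarrow> ip (\<lambda>x. f x + g x) h = ip f h + ip g h"
  using rkhs unfolding rkhs_def by blast

lemma ip_scale_left: "f \<in> H \<Longrightarrow> g \<in> H \<Longrightarrow> ip (\<lambda>x. c * f x) g = c * ip f g"
  using rkhs unfolding rkhs_def by blast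

lemma ip_conj_sym: "f \<in> H \<Longrightarrow> g \<in> H \<Longrightarrow> ip f g = cnj (ip g f)"
  using rkhs unfolding rkhs_def by blast

lemma ip_self_real: "f \<in> H \<Longrightarrow> Im (ip f f) = 0"
  using rkhs unfolding rkhs_def by blast

lemma ip_self_Re_nonneg: "f \<in> H \<Longrightarrow> Re (ip f f) \<ge> 0"
  using rkhs unfolding rkhs_def by blast

lemma ip_self_eq_0D: "f \<in> H \<Longrightarrow> ip f f = 0 \<Longrightarrow> f = (\<lambda>x. 0)"
  using rkhs unfolding rkhs_def by blast

lemma Cauchy_has_limit:
  "(\<And>n. F n \<in> H) \<Longrightarrow> (\<forall>e>0. \<exists>N. \<forall>m\<ge>N. \<forall>n\<ge>N. dist_H (F m) (F n) < e) \<Longrightarrow>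
     \<exists>g\<in>H. (\<lambda>n. dist_H (F n) g) \<longlonglongrightarrow> 0"
  using rkhs unfolding rkhs_def by blast

lemma kfun_mem: "w \<in> \<Omega> \<Longrightarrow> kfun \<Omega> K w \<in> H"
  using rkhs unfolding rkhs_def by blast

lemma reproducing: "w \<in> \<Omega> \<Longrightarrow> f \<in> H \<Longrightarrow> f w = ip f (kfun \<Omega> K w)"
  using rkhs unfolding rkhs_def by blast

lemma diff_mem: "f \<in> H \<Longrightarrow> g \<in> H \<Longrightarrow> (\<lambda>x. f x - g x) \<in> H"
  using add_mem[of f "\<lambda>x. (-1) * g x"] scale_mem[of g "-1"] by simp

lemma sum_mem: "finite I \<Longrightarrow> (\<And>i. i \<in> I \<Longrightarrow> f i \<in> H) \<Longrightarrow> (\<lambda>x. \<Sum>i\<in>I. c i * f i x) \<in> H"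
  by (induction I rule: finite_induct) (simp_all add: zero_mem add_mem scale_mem)

lemma ip_scale_right:
  assumes "f \<in> H" "g \<in> H"
  shows "ip f (\<lambda>x. c * g x) = cnj c * ip f g"
  using ip_conj_sym[OF assms(1) scale_mem[OF assms(2)]] ip_scale_left[OF assms(2,1)]
    ip_conj_sym[OF assms(2,1)] by simp

lemma ip_diff_left:
  assumes "f \<in> H" "g \<in> H" "h \<in> H"
  shows "ip (\<lambda>x. f x - g x) h = ip f h - ip g h"
  using ip_add_left[OF assms(1) scale_mem[OF assms(2), of "-1"] assms(3)]
    ip_scale_left[OF assms(2,3), of "-1"] by simp

lemma ip_diff_right:
  assumes "f \<in> H" "g \<in> H" "h \<in> H"
  shows "ip h (\<lambda>x. f x - g x) = ip h f - ip h g"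
  using ip_conj_sym[OF assms(3) diff_mem[OF assms(1,2)]] ip_diff_left[OF assms]
    ip_conj_sym[OF assms(1,3)] ip_conj_sym[OF assms(2,3)] by simp

lemma ip_zero_left: "f \<in> H \<Longrightarrow> ip (\<lambda>x. 0) f = 0"
  using ip_scale_left[of "\<lambda>x. 0" f 0] zero_mem by simp

lemma ip_zero_right: "f \<in> H \<Longrightarrow> ip f (\<lambda>x. 0) = 0"
  using ip_conj_sym[of f "\<lambda>x. 0"] ip_zero_left[of f] zero_mem by simp

lemma ip_sum_left:
  "finite I \<Longrightarrow> (\<And>i. i \<in> I \<Longrightarrow> f i \<in> H) \<Longrightarrow> g \<in> H \<Longrightarrow>
     ip (\<lambda>x. \<Sum>i\<in>I. c i * f i x) g = (\<Sum>i\<in>I. c i * ip (f i) g)"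
proof (induction I rule: finite_induct)
  case empty
  then show ?case using ip_zero_left by simp
next
  case (insert j I)
  then show ?case by (simp add: ip_add_left ip_scale_left scale_mem sum_mem)
qed

lemma ip_sum_right:
  assumes "finite I" "\<And>i. i \<in> I \<Longrightarrow> f i \<in> H" "g \<in> H"
  shows "ip g (\<lambda>x. \<Sum>i\<in>I. c i * f i x) = (\<Sum>i\<in>I. cnj (c i) * ip g (f i))"
proof -
  have "ip g (\<lambda>x. \<Sum>i\<in>I. c i * f i x) = cnj (\<Sum>i\<in>I. c i * ip (f i) g)"
    using assms ip_conj_sym[OF assms(3) sum_mem[OF assms(1,2)]] ip_sum_left[OF assms] by simp
  also have "\<dots> = (\<Sum>i\<in>I. cnj (c i) * ip g (f i))"
    using assms(2) ip_conj_sym[OF assms(2) assms(3)] by simp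
  finally show ?thesis .
qed

lemma ip_self_eq_ipnorm: "f \<in> H \<Longrightarrow> ip f f = complex_of_real ((ipnorm ip f)\<^sup>2)"
  using ip_self_real[of f] ip_self_Re_nonneg[of f] by (simp add: ipnorm_def complex_eq_iff)

lemma ipnorm_nonneg: "f \<in> H \<Longrightarrow> ipnorm ip f \<ge> 0"
  by (simp add: ipnorm_def ip_self_Re_nonneg)

lemma ipnorm_eq_0D: "w \<in> H \<Longrightarrow> ipnorm ip w = 0 \<Longrightarrow> w = (\<lambda>x. 0)"
  using ip_self_eq_ipnorm ip_self_eq_0D by simp

lemma ipnorm_diff_sq:
  assumes "f \<in> H" "g \<in> H"
  shows "(dist_H f g)\<^sup>2 = Re (ip f f - ip f g - ip g f + ip g g)"
proof -
  have "(dist_H f g)\<^sup>2 = Re (ip (\<lambda>x. f x - g x) (\<lambda>x. f x - g x))"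
    using ip_self_eq_ipnorm[of "\<lambda>x. f x - g x"] assms diff_mem by simp
  then show ?thesis
    using assms by (simp add: diff_mem ip_diff_left ip_diff_right)
qed

lemma ip_self_diff:
  "f \<in> H \<Longrightarrow> g \<in> H \<Longrightarrow> ip (\<lambda>x. f x - g x) (\<lambda>x. f x - g x) = ip f f - ip f g - ip g f + ip g g"
  by (simp add: ip_diff_left ip_diff_right diff_mem)

lemma dist_H_commute: "f \<in> H \<Longrightarrow> g \<in> H \<Longrightarrow> dist_H f g = dist_H g f"
  unfolding ipnorm_def by (simp only: ip_self_diff) (simp add: algebra_simps)

lemma ip_scaled_diffs:
  assumes "A \<in> H" "B \<in> H" "C \<in> H" "D \<in> H"
  shows "ip (\<lambda>x. c * (A x - B x)) (\<lambda>x. d * (C x - D x)) =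
           c * cnj d * (ip A C - ip A D - ip B C + ip B D)"
proof -
  have "ip (\<lambda>x. c * (A x - B x)) (\<lambda>x. d * (C x - D x)) =
      c * cnj d * ip (\<lambda>x. A x - B x) (\<lambda>x. C x - D x)"
    using assms by (simp add: ip_scale_left ip_scale_right scale_mem diff_mem)
  also have "ip (\<lambda>x. A x - B x) (\<lambda>x. C x - D x) = ip A C - ip A D - (ip B C - ip B D)"
    using assms by (simp add: ip_diff_left ip_diff_right diff_mem)
  finally show ?thesis by (simp add: algebra_simps)
qed

lemma cauchy_schwarz:
  assumes f: "f \<in> H" and g: "g \<in> H"
  shows "norm (ip f g) \<le> ipnorm ip f * ipnorm ip g"
proof (cases "ip g g = 0")
  case True
  then show ?thesis
    using ip_self_eq_0D[OF g] ip_zero_right[OF f] ipnorm_nonneg[OF f] ipnorm_nonneg[OF g] by simp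
next
  case False
  define x where "x = ip f g"
  define \<gamma> where "\<gamma> = (ipnorm ip g)\<^sup>2"
  have gg: "ip g g = of_real \<gamma>" using ip_self_eq_ipnorm[OF g] unfolding \<gamma>_def by simp
  with False have "\<gamma> \<noteq> 0" by auto
  then have "\<gamma> > 0" unfolding \<gamma>_def by simp
  define c where "c = x / of_real \<gamma>"
  have xx: "x * cnj x = of_real ((norm x)\<^sup>2)" by (rule complex_norm_square[symmetric])
  have "cnj c * x = of_real ((norm x)\<^sup>2 / \<gamma>)" "c * cnj x = of_real ((norm x)\<^sup>2 / \<gamma>)"
    "c * cnj c * of_real \<gamma> = of_real ((norm x)\<^sup>2 / \<gamma>)"
    using \<open>\<gamma> \<noteq> 0\<close> xx by (simp_all add: c_def ac_simps power2_eq_square)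
  moreover have "ip (\<lambda>y. f y - c * g y) (\<lambda>y. f y - c * g y) =
      ip f f - cnj c * x - c * cnj x + c * cnj c * of_real \<gamma>"
    using f g scale_mem[OF g] ip_conj_sym[OF g f] gg
    by (simp add: ip_self_diff ip_scale_left ip_scale_right x_def)
  ultimately have "ip (\<lambda>y. f y - c * g y) (\<lambda>y. f y - c * g y) = ip f f - of_real ((norm x)\<^sup>2 / \<gamma>)"
    by simp
  moreover have "Re (ip (\<lambda>y. f y - c * g y) (\<lambda>y. f y - c * g y)) \<ge> 0"
    using f g by (intro ip_self_Re_nonneg diff_mem scale_mem)
  ultimately have "(norm x)\<^sup>2 / \<gamma> \<le> (ipnorm ip f)\<^sup>2"
    using ip_self_eq_ipnorm[OF f] by simp
  then have "(norm x)\<^sup>2 \<le> (ipnorm ip f * ipnorm ip g)\<^sup>2"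
    using \<open>\<gamma> > 0\<close> unfolding \<gamma>_def by (simp add: divide_le_eq power_mult_distrib)
  then show ?thesis
    unfolding x_def by (rule power2_le_imp_le) (simp add: ipnorm_nonneg f g)
qed

lemma ip_tendsto_left:
  assumes F: "\<And>n. F n \<in> H" and g: "g \<in> H" and h: "h \<in> H"
    and lim: "(\<lambda>n. dist_H (F n) g) \<longlonglongrightarrow> 0"
  shows "(\<lambda>n. ip (F n) h) \<longlonglongrightarrow> ip g h"
proof -
  have "\<forall>n. norm (ip (F n) h - ip g h) \<le> dist_H (F n) g * ipnorm ip h"
    using cauchy_schwarz[OF diff_mem[OF F g] h] ip_diff_left[OF F g h] by simp
  then have "(\<lambda>n. ip (F n) h - ip g h) \<longlonglongrightarrow> 0"
    by (rule Lim_null_comparison[OF always_eventually tendsto_mult_left_zero[OF lim]])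
  then show ?thesis by (simp only: LIM_zero_iff)
qed

lemma ip_tendsto_right:
  assumes F: "\<And>n. F n \<in> H" and g: "g \<in> H" and h: "h \<in> H"
    and lim: "(\<lambda>n. dist_H (F n) g) \<longlonglongrightarrow> 0"
  shows "(\<lambda>n. ip h (F n)) \<longlonglongrightarrow> ip h g"
proof -
  have "(\<lambda>n. cnj (ip (F n) h)) \<longlonglongrightarrow> cnj (ip g h)"
    by (rule tendsto_cnj[OF ip_tendsto_left[OF assms]])
  moreover have "cnj (ip (F n) h) = ip h (F n)" for n
    using ip_conj_sym[OF h F] by simp
  ultimately show ?thesis
    using ip_conj_sym[OF h g] by simp
qed

lemma dist_H_tendsto_0I:
  assumes "\<And>n. F n \<in> H" "g \<in> H"
    and "(\<lambda>n. Re (ip (F n) (F n) - ip (F n) g - ip g (F n) + ip g g)) \<longlonglongrightarrow> 0"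
  shows "(\<lambda>n. dist_H (F n) g) \<longlonglongrightarrow> 0"
proof -
  have "(\<lambda>n. sqrt ((dist_H (F n) g)\<^sup>2)) \<longlonglongrightarrow> sqrt 0"
    using assms(3) by (intro tendsto_real_sqrt) (simp only: ipnorm_diff_sq[OF assms(1,2)])
  moreover have "sqrt ((dist_H (F n) g)\<^sup>2) = dist_H (F n) g" for n
    using ipnorm_nonneg[OF diff_mem[OF assms(1,2)]] by simp
  ultimately show ?thesis by simp
qed

lemma Cauchy_of_ip_bound:
  assumes F: "\<And>q. F q \<in> H" and bound: "\<And>q l. norm (ip (F q) (F l) - c) \<le> W q + W l"
    and W: "W \<longlonglongrightarrow> 0"
  shows "\<forall>e>0. \<exists>N. \<forall>m\<ge>N. \<forall>n\<ge>N. dist_H (F m) (F n) < e"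
proof (intro allI impI)
  fix e :: real assume "e > 0"
  then obtain N where N: "\<And>x. x \<ge> N \<Longrightarrow> W x < e\<^sup>2 / 8"
    using order_tendstoD(2)[OF W, of "e\<^sup>2 / 8"] by (auto simp: eventually_sequentially)
  have "dist_H (F q) (F l) < e" if "q \<ge> N" "l \<ge> N" for q l
  proof -
    have "(dist_H (F q) (F l))\<^sup>2 =
        Re ((ip (F q) (F q) - c) - (ip (F q) (F l) - c) - (ip (F l) (F q) - c) + (ip (F l) (F l) - c))"
      using ipnorm_diff_sq[OF F F] by simp
    also have "\<dots> \<le> norm ((ip (F q) (F q) - c) - (ip (F q) (F l) - c) - (ip (F l) (F q) - c)
        + (ip (F l) (F l) - c))"
      by (rule complex_Re_le_cmod)
    also have "\<dots> \<le> norm (ip (F q) (F q) - c) + norm (ip (F q) (F l) - c) + norm (ip (F l) (F q) - c)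
        + norm (ip (F l) (F l) - c)"
      by (intro order.trans[OF norm_triangle_ineq] add_mono order.trans[OF norm_triangle_ineq4]
          order_refl)
    also have "\<dots> < e\<^sup>2"
      using bound[of q q] bound[of q l] bound[of l q] bound[of l l] N[OF that(1)] N[OF that(2)]
      by linarith
    finally show ?thesis using \<open>e > 0\<close> by (simp add: power_less_imp_less_base)
  qed
  then show "\<exists>N. \<forall>m\<ge>N. \<forall>n\<ge>N. dist_H (F m) (F n) < e" by blast
qed

lemma norm_limit_eq_pointwise_limit:
  assumes F: "\<And>q. F q \<in> H" and h: "h \<in> H" and lim: "(\<lambda>q. dist_H (F q) h) \<longlonglongrightarrow> 0"
    and pointwise: "\<And>x. x \<in> \<Omega> \<Longrightarrow> (\<lambda>q. F q x) \<longlonglongrightarrow> g x"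
    and outside: "\<And>x. x \<notin> \<Omega> \<Longrightarrow> g x = 0"
  shows "h = g"
proof
  fix x
  show "h x = g x"
  proof (cases "x \<in> \<Omega>")
    case True
    have "(\<lambda>q. ip (F q) (kfun \<Omega> K x)) \<longlonglongrightarrow> ip h (kfun \<Omega> K x)"
      using F h kfun_mem[OF True] lim by (rule ip_tendsto_left)
    then have "(\<lambda>q. F q x) \<longlonglongrightarrow> h x"
      using reproducing[OF True] F h by simp
    then show ?thesis using pointwise[OF True] LIMSEQ_unique by blast
  next
    case False
    then show ?thesis using vanishes_outside[OF h] outside by simp
  qed
qed

lemma fspan_mem: "B \<subseteq> H \<Longrightarrow> g \<in> fspan B \<Longrightarrow> g \<in> H"
  unfolding fspan_def using sum_mem[of _ "\<lambda>e. e"] by blast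

end

section \<open>Orthonormal families and Gram--Schmidt orthonormalization\<close>

lemma cnj_mult_self: "cnj z * z = complex_of_real ((norm z)\<^sup>2)"
  using complex_norm_square[of z] by (simp add: mult.commute)

text \<open>Orthonormal families may contain zero vectors: Gram--Schmidt produces them from a linearly
  dependent sequence.\<close>

locale orthonormal_family = rkhs_space +
  fixes u :: "nat \<Rightarrow> 'a \<Rightarrow> complex"
  assumes family_mem: "u j \<in> H"
    and family_ip: "ip (u i) (u j) = (if i = j \<and> u i \<noteq> (\<lambda>x. 0) then 1 else 0)"
begin

definition fourier_sum :: "('a \<Rightarrow> complex) \<Rightarrow> nat \<Rightarrow> 'a \<Rightarrow> complex" where
  "fourier_sum f N = (\<lambda>x. \<Sum>j<N. ip f (u j) * u j x)"

definition bessel_sum :: "('a \<Rightarrow> complex) \<Rightarrow> nat \<Rightarrow> real" where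
  "bessel_sum f N = (\<Sum>i<N. (norm (ip f (u i)))\<^sup>2)"

lemma fourier_sum_mem: "fourier_sum f N \<in> H"
  unfolding fourier_sum_def using family_mem by (intro sum_mem) auto

lemma ip_fourier_sum_family:
  assumes f: "f \<in> H"
  shows "ip (fourier_sum f N) (u i) = (if i < N then ip f (u i) else 0)"
proof -
  have "ip (fourier_sum f N) (u i) = (\<Sum>j<N. ip f (u j) * ip (u j) (u i))"
    unfolding fourier_sum_def using family_mem by (intro ip_sum_left) auto
  also have "\<dots> = (\<Sum>j<N. if j = i then (if u i \<noteq> (\<lambda>x. 0) then ip f (u i) else 0) else 0)"
    by (intro sum.cong) (auto simp: family_ip)
  also have "\<dots> = (if i < N then ip f (u i) else 0)"
    using ip_zero_right[OF f] by auto
  finally show ?thesis .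
qed

lemma ip_fourier_sum_fourier_sum:
  assumes f: "f \<in> H"
  shows "ip (fourier_sum f N) (fourier_sum f M) = complex_of_real (bessel_sum f (min N M))"
proof -
  have "ip (fourier_sum f N) (fourier_sum f M) = (\<Sum>i<M. cnj (ip f (u i)) * ip (fourier_sum f N) (u i))"
    unfolding fourier_sum_def[of f M] using family_mem fourier_sum_mem by (intro ip_sum_right) auto
  also have "\<dots> = (\<Sum>i<M. if i \<in> {..<N} then complex_of_real ((norm (ip f (u i)))\<^sup>2) else 0)"
    using ip_fourier_sum_family[OF f] cnj_mult_self by (intro sum.cong) auto
  also have "\<dots> = (\<Sum>i\<in>{..<M} \<inter> {..<N}. complex_of_real ((norm (ip f (u i)))\<^sup>2))"
    by (simp only: sum.inter_restrict[OF finite_lessThan])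
  also have "{..<M} \<inter> {..<N} = {..<min N M}" by auto
  finally show ?thesis unfolding bessel_sum_def by simp
qed

lemma ip_fourier_sum_right: "f \<in> H \<Longrightarrow> ip f (fourier_sum f N) = complex_of_real (bessel_sum f N)"
  unfolding fourier_sum_def bessel_sum_def using family_mem
  by (subst ip_sum_right) (auto simp: cnj_mult_self)

lemma ip_fourier_sum_left: "f \<in> H \<Longrightarrow> ip (fourier_sum f N) f = complex_of_real (bessel_sum f N)"
  using ip_conj_sym[OF fourier_sum_mem] ip_fourier_sum_right by simp

lemma dist_fourier_sum_sq: "f \<in> H \<Longrightarrow> (dist_H f (fourier_sum f N))\<^sup>2 = Re (ip f f) - bessel_sum f N"
  using ipnorm_diff_sq[OF _ fourier_sum_mem] ip_fourier_sum_right ip_fourier_sum_left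
    ip_fourier_sum_fourier_sum[of f N N] by simp

lemma bessel_inequality: "f \<in> H \<Longrightarrow> bessel_sum f N \<le> Re (ip f f)"
  using dist_fourier_sum_sq[of f N] by (metis diff_ge_0_iff_ge zero_le_power2)

lemma dist_fourier_sums_sq:
  assumes f: "f \<in> H"
  shows "(dist_H (fourier_sum f N) (fourier_sum f M))\<^sup>2 = \<bar>bessel_sum f N - bessel_sum f M\<bar>"
proof -
  have mono: "N \<le> M \<Longrightarrow> bessel_sum f N \<le> bessel_sum f M" for N M
    unfolding bessel_sum_def by (intro sum_mono2) auto
  show ?thesis
    using ipnorm_diff_sq[OF fourier_sum_mem fourier_sum_mem] ip_fourier_sum_fourier_sum[OF f]
      mono[of N M] mono[of M N]
    by (cases "N \<le> M") (auto simp: min_def)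
qed

lemma fourier_sum_Cauchy:
  assumes f: "f \<in> H"
  shows "\<forall>e>0. \<exists>N. \<forall>m\<ge>N. \<forall>n\<ge>N. dist_H (fourier_sum f m) (fourier_sum f n) < e"
proof (intro allI impI)
  fix e :: real assume "e > 0"
  have "summable (\<lambda>i. (norm (ip f (u i)))\<^sup>2)"
    using bessel_inequality[OF f]
    by (intro summableI_nonneg_bounded[where x="Re (ip f f)"]) (auto simp: bessel_sum_def)
  then have "Cauchy (bessel_sum f)"
    unfolding bessel_sum_def by (rule LIMSEQ_imp_Cauchy[OF summable_LIMSEQ])
  then obtain N where N: "\<forall>m\<ge>N. \<forall>n\<ge>N. norm (bessel_sum f m - bessel_sum f n) < e\<^sup>2"
    using CauchyD[of "bessel_sum f" "e\<^sup>2"] \<open>e > 0\<close> by auto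
  have "dist_H (fourier_sum f m) (fourier_sum f n) < e" if "m \<ge> N" "n \<ge> N" for m n
  proof -
    have "(dist_H (fourier_sum f m) (fourier_sum f n))\<^sup>2 < e\<^sup>2"
      using N that dist_fourier_sums_sq[OF f, of m n] by simp
    then show ?thesis by (rule power_less_imp_less_base) (use \<open>e > 0\<close> in simp)
  qed
  then show "\<exists>N. \<forall>m\<ge>N. \<forall>n\<ge>N. dist_H (fourier_sum f m) (fourier_sum f n) < e" by blast
qed

lemma fourier_sum_converges:
  assumes f: "f \<in> H"
  obtains h where "h \<in> H" "(\<lambda>N. dist_H (fourier_sum f N) h) \<longlonglongrightarrow> 0" "\<And>i. ip h (u i) = ip f (u i)"
proof -
  obtain h where h: "h \<in> H" and lim: "(\<lambda>N. dist_H (fourier_sum f N) h) \<longlonglongrightarrow> 0"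
    using Cauchy_has_limit[of "fourier_sum f", OF fourier_sum_mem fourier_sum_Cauchy[OF f]] by blast
  have "ip h (u i) = ip f (u i)" for i
  proof -
    have "(\<lambda>N. ip (fourier_sum f N) (u i)) \<longlonglongrightarrow> ip h (u i)"
      using fourier_sum_mem h family_mem lim by (rule ip_tendsto_left)
    then have "(\<lambda>N. ip (fourier_sum f (N + Suc i)) (u i)) \<longlonglongrightarrow> ip h (u i)"
      by (rule LIMSEQ_ignore_initial_segment)
    then show ?thesis using ip_fourier_sum_family[OF f] by (simp add: LIMSEQ_const_iff)
  qed
  then show ?thesis using that h lim by blast
qed

lemma fourier_sum_tendsto:
  assumes total: "\<And>g. g \<in> H \<Longrightarrow> (\<forall>j. ip g (u j) = 0) \<Longrightarrow> g = (\<lambda>x. 0)" and f: "f \<in> H"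
  shows "(\<lambda>N. dist_H f (fourier_sum f N)) \<longlonglongrightarrow> 0"
proof -
  obtain h where h: "h \<in> H" "(\<lambda>N. dist_H (fourier_sum f N) h) \<longlonglongrightarrow> 0"
    and h_u: "\<And>i. ip h (u i) = ip f (u i)"
    using fourier_sum_converges[OF f] by blast
  have "\<forall>j. ip (\<lambda>x. f x - h x) (u j) = 0"
    using f h h_u family_mem by (simp add: ip_diff_left)
  then have "f = h" using total[OF diff_mem[OF f h(1)]] by (simp add: fun_eq_iff)
  then show ?thesis using h dist_H_commute[OF fourier_sum_mem h(1)] by simp
qed

lemma family_inj: "inj_on u {j. u j \<noteq> (\<lambda>x. 0)}"
proof (rule inj_onI, rule ccontr)
  fix i j assume "i \<in> {j. u j \<noteq> (\<lambda>x. 0)}" "u i = u j" "i \<noteq> j"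
  then have "ip (u i) (u i) = 0" using family_ip[of i j] by simp
  then show False using family_ip[of i i] \<open>i \<in> _\<close> by simp
qed

lemma fourier_sum_in_fspan: "fourier_sum f N \<in> fspan {u j |j. u j \<noteq> (\<lambda>x. 0)}"
proof -
  define J where "J = {j. j < N \<and> u j \<noteq> (\<lambda>x. 0)}"
  have "fourier_sum f N = (\<lambda>x. \<Sum>j\<in>J. ip f (u j) * u j x)"
    unfolding fourier_sum_def J_def by (intro ext sum.mono_neutral_right) auto
  also have "\<dots> = (\<lambda>x. \<Sum>e\<in>u ` J. ip f e * e x)"
    using inj_on_subset[OF family_inj, of J] unfolding J_def by (subst sum.reindex) auto
  finally show ?thesis
    unfolding fspan_def by (intro CollectI exI[of _ "u ` J"] exI[of _ "\<lambda>e. ip f e"]) (auto simp: J_def)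
qed

lemma orthonormal_basis_if_total:
  assumes "\<And>g. g \<in> H \<Longrightarrow> (\<forall>j. ip g (u j) = 0) \<Longrightarrow> g = (\<lambda>x. 0)"
  shows "orthonormal_basis H ip {u j |j. u j \<noteq> (\<lambda>x. 0)}"
proof -
  have "\<exists>g\<in>fspan {u j |j. u j \<noteq> (\<lambda>x. 0)}. dist_H f g < \<epsilon>" if "f \<in> H" "\<epsilon> > 0" for f \<epsilon>
    using order_tendstoD(2)[OF fourier_sum_tendsto[OF assms that(1)] that(2)] fourier_sum_in_fspan
    by (auto simp: eventually_sequentially)
  moreover have "\<forall>e\<in>{u j |j. u j \<noteq> (\<lambda>x. 0)}. \<forall>e'\<in>{u j |j. u j \<noteq> (\<lambda>x. 0)}. e \<noteq> e' \<longrightarrow> ip e e' = 0"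
    using family_ip by auto
  ultimately show ?thesis unfolding orthonormal_basis_def using family_mem family_ip by auto
qed

end

locale gram_schmidt = rkhs_space +
  fixes v :: "nat \<Rightarrow> 'a \<Rightarrow> complex"
  assumes v_mem: "v n \<in> H"
begin

text \<open>Division by zero gives \<open>0\<close>, so a zero residual is normalized to zero.\<close>

definition gs_normalize :: "('a \<Rightarrow> complex) \<Rightarrow> 'a \<Rightarrow> complex" where
  "gs_normalize w = (\<lambda>x. complex_of_real (1 / ipnorm ip w) * w x)"

fun gs :: "nat \<Rightarrow> 'a \<Rightarrow> complex" where
  "gs n = gs_normalize (\<lambda>x. v n x - (\<Sum>j<n. ip (v n) (gs j) * gs j x))"

declare gs.simps [simp del]

definition gs_residual :: "nat \<Rightarrow> 'a \<Rightarrow> complex" where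
  "gs_residual n = (\<lambda>x. v n x - (\<Sum>j<n. ip (v n) (gs j) * gs j x))"

lemma gs_eq: "gs n = gs_normalize (gs_residual n)"
  unfolding gs_residual_def by (rule gs.simps)

lemma gs_normalize_mem: "w \<in> H \<Longrightarrow> gs_normalize w \<in> H"
  unfolding gs_normalize_def by (rule scale_mem)

lemma ip_gs_normalize_left:
  "w \<in> H \<Longrightarrow> g \<in> H \<Longrightarrow> ip (gs_normalize w) g = complex_of_real (1 / ipnorm ip w) * ip w g"
  unfolding gs_normalize_def by (rule ip_scale_left)

lemma gs_normalize_unit:
  assumes "w \<in> H" "ipnorm ip w \<noteq> 0"
  shows "ip (gs_normalize w) (gs_normalize w) = 1"
proof -
  define c where "c = complex_of_real (1 / ipnorm ip w)"
  have "ip (gs_normalize w) (gs_normalize w) = c * cnj c * ip w w"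
    unfolding gs_normalize_def c_def[symmetric]
    by (simp only: ip_scale_left[OF assms(1) scale_mem[OF assms(1)]] ip_scale_right[OF assms(1,1)]
        mult.assoc)
  then show ?thesis
    using assms ip_self_eq_ipnorm[OF assms(1)] by (simp add: c_def power2_eq_square)
qed

lemma gs_normalize_zero: "ipnorm ip w = 0 \<Longrightarrow> gs_normalize w = (\<lambda>x. 0)"
  unfolding gs_normalize_def by simp

lemma scale_gs_normalize: "w \<in> H \<Longrightarrow> (\<lambda>x. complex_of_real (ipnorm ip w) * gs_normalize w x) = w"
  using ipnorm_eq_0D[of w] by (cases "ipnorm ip w = 0") (auto simp: gs_normalize_def)

lemma gs_residual_mem: "(\<And>j. j < n \<Longrightarrow> gs j \<in> H) \<Longrightarrow> gs_residual n \<in> H"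
  unfolding gs_residual_def using v_mem by (intro diff_mem sum_mem) auto

lemma gs_orthonormal:
  "gs n \<in> H \<and> (gs n = (\<lambda>x. 0) \<or> ip (gs n) (gs n) = 1) \<and> (\<forall>i<n. ip (gs n) (gs i) = 0)"
proof (induction n rule: less_induct)
  case (less n)
  have mem: "\<And>j. j < n \<Longrightarrow> gs j \<in> H" using less by blast
  have orth: "ip (gs j) (gs i) = 0" if "i < n" "j < n" "i \<noteq> j" for i j
  proof (cases "i < j")
    case True
    then show ?thesis using less that by blast
  next
    case False
    then have "ip (gs i) (gs j) = 0" using less that by auto
    then show ?thesis using ip_conj_sym[OF mem mem, of j i] that by simp
  qed
  have W_mem: "gs_residual n \<in> H" by (rule gs_residual_mem[OF mem])
  have W_orth: "ip (gs_residual n) (gs i) = 0" if "i < n" for i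
  proof -
    have "ip (v n) (gs j) * ip (gs j) (gs i) = (if j = i then ip (v n) (gs i) else 0)" if "j < n" for j
      using orth[of i j] less[rule_format, of i] \<open>i < n\<close> that ip_zero_right[OF v_mem] by auto
    moreover have "ip (\<lambda>x. \<Sum>j<n. ip (v n) (gs j) * gs j x) (gs i) =
        (\<Sum>j<n. ip (v n) (gs j) * ip (gs j) (gs i))"
      using mem \<open>i < n\<close> by (intro ip_sum_left) auto
    ultimately have "ip (\<lambda>x. \<Sum>j<n. ip (v n) (gs j) * gs j x) (gs i) = ip (v n) (gs i)"
      using \<open>i < n\<close> by simp
    moreover have "(\<lambda>x. \<Sum>j<n. ip (v n) (gs j) * gs j x) \<in> H"
      using mem by (intro sum_mem) auto
    ultimately show ?thesis
      unfolding gs_residual_def using ip_diff_left v_mem mem[OF \<open>i < n\<close>] by simp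
  qed
  have "ip (gs n) (gs i) = 0" if "i < n" for i
    using W_orth[OF that] ip_gs_normalize_left[OF W_mem mem[OF that]] gs_eq[of n] by simp
  moreover have "gs n = (\<lambda>x. 0) \<or> ip (gs n) (gs n) = 1"
    using gs_normalize_unit[OF W_mem] gs_normalize_zero unfolding gs_eq[of n] by blast
  ultimately show ?case using gs_normalize_mem[OF W_mem] gs_eq by simp
qed

lemma gs_mem: "gs n \<in> H"
  using gs_orthonormal by blast

lemma gs_ip: "ip (gs i) (gs j) = (if i = j \<and> gs i \<noteq> (\<lambda>x. 0) then 1 else 0)"
proof -
  have "ip (gs i) (gs j) = 0" if "i \<noteq> j"
  proof (cases "j < i")
    case True
    then show ?thesis using gs_orthonormal by blast
  next
    case False
    with that have "ip (gs j) (gs i) = 0" using gs_orthonormal by simp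
    then show ?thesis using ip_conj_sym[OF gs_mem gs_mem, of i j] by simp
  qed
  moreover have "ip (gs i) (gs i) = 1" if "gs i \<noteq> (\<lambda>x. 0)"
    using gs_orthonormal[of i] that by blast
  ultimately show ?thesis using ip_zero_left[OF gs_mem] ip_zero_right[OF gs_mem] by auto
qed

lemma v_eq_gs_sum: "v n = (\<lambda>x. \<Sum>j<Suc n. ip (v n) (gs j) * gs j x)"
proof -
  define W where "W = gs_residual n"
  define S where "S = (\<lambda>x. \<Sum>j<n. ip (v n) (gs j) * gs j x)"
  have W_mem: "W \<in> H" unfolding W_def by (rule gs_residual_mem[OF gs_mem])
  have S_mem: "S \<in> H" unfolding S_def by (rule sum_mem[OF _ gs_mem]) simp
  have v_eq: "v n = (\<lambda>x. W x + S x)" unfolding W_def gs_residual_def S_def by simp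
  have "ip S (gs n) = 0"
    unfolding S_def using gs_mem by (simp add: ip_sum_left gs_ip)
  then have "ip (v n) (gs n) = ip W (gs n)"
    using v_eq W_mem S_mem gs_mem by (simp add: ip_add_left)
  also have "\<dots> = complex_of_real (ipnorm ip W)" if "ipnorm ip W \<noteq> 0"
  proof -
    have W_eq: "(\<lambda>x. complex_of_real (ipnorm ip W) * gs n x) = W"
      unfolding gs_eq W_def by (rule scale_gs_normalize[OF W_mem[unfolded W_def]])
    have "ip W (gs n) = ip (\<lambda>x. complex_of_real (ipnorm ip W) * gs n x) (gs n)"
      by (simp only: W_eq)
    also have "\<dots> = complex_of_real (ipnorm ip W)"
      using ip_scale_left[OF gs_mem gs_mem] gs_normalize_unit[OF W_mem that]
      unfolding gs_eq[of n, symmetric] W_def by simp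
    finally show ?thesis .
  qed
  finally have "ip (v n) (gs n) * gs n x = W x" for x
    using scale_gs_normalize[OF W_mem] gs_normalize_zero unfolding gs_eq W_def
    by (cases "ipnorm ip (gs_residual n) = 0") (auto dest: fun_cong[of _ _ x])
  then show ?thesis using v_eq unfolding S_def by (simp add: add.commute)
qed

lemma gs_closed:
  assumes zero: "Q (\<lambda>x. 0)" and add: "\<And>f g. Q f \<Longrightarrow> Q g \<Longrightarrow> Q (\<lambda>x. f x + g x)"
    and scale: "\<And>f c. Q f \<Longrightarrow> Q (\<lambda>x. c * f x)" and v: "\<And>n. Q (v n)"
  shows "Q (gs n)"
proof (induction n rule: less_induct)
  case (less n)
  have "Q (\<lambda>x. \<Sum>j\<in>I. ip (v n) (gs j) * gs j x)" if "finite I" "I \<subseteq> {..<n}" for I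
    using that
  proof (induction I rule: finite_induct)
    case empty
    then show ?case using zero by simp
  next
    case (insert j I)
    then have "Q (\<lambda>x. ip (v n) (gs j) * gs j x + (\<Sum>j\<in>I. ip (v n) (gs j) * gs j x))"
      using less by (intro add scale) auto
    then show ?case using insert by simp
  qed
  then have "Q (\<lambda>x. v n x + (-1) * (\<Sum>j<n. ip (v n) (gs j) * gs j x))"
    by (intro add scale v) auto
  then have "Q (gs_residual n)" unfolding gs_residual_def by simp
  then show ?case unfolding gs_eq gs_normalize_def by (rule scale)
qed

sublocale orthonormal_family \<Omega> H ip K gs
  by unfold_locales (simp_all add: gs_mem gs_ip)

lemma gs_orthonormal_basis:
  assumes total: "\<And>f. f \<in> H \<Longrightarrow> (\<forall>n. ip f (v n) = 0) \<Longrightarrow> f = (\<lambda>x. 0)"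
  shows "orthonormal_basis H ip {gs j |j. gs j \<noteq> (\<lambda>x. 0)}"
proof (rule orthonormal_basis_if_total)
  fix f assume f: "f \<in> H" and orth: "\<forall>j. ip f (gs j) = 0"
  have "ip f (v n) = (\<Sum>j<Suc n. cnj (ip (v n) (gs j)) * ip f (gs j))" for n
    by (subst v_eq_gs_sum) (intro ip_sum_right gs_mem f finite_lessThan)
  then have "ip f (v n) = 0" for n using orth by simp
  then show "f = (\<lambda>x. 0)" using total[OF f] by blast
qed

end

section \<open>Dirichlet polynomials\<close>

lemma npow_of_real: "npow p (complex_of_real t) = complex_of_real (real p powr (- t))"
  unfolding npow_def using powr_of_real[of "real p" "-t"] by simp

lemma npow_0 [simp]: "npow 0 s = 0"
  unfolding npow_def by simp

lemma cnj_npow: "npow n (cnj w) = cnj (npow n w)"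
  unfolding npow_def by (subst cnj_powr) auto

lemma sums_iff_atLeastAtMost:
  fixes f :: "nat \<Rightarrow> 'a::real_normed_vector"
  assumes "f 0 = 0"
  shows "f sums S \<longleftrightarrow> (\<lambda>N. \<Sum>p=1..N. f p) \<longlonglongrightarrow> S"
proof -
  have "(\<Sum>p=1..N. f p) = (\<Sum>p<Suc N. f p)" for N
    using assms by (intro sum.mono_neutral_left) (auto simp: not_le)
  then show ?thesis
    unfolding sums_def using filterlim_sequentially_Suc[of "\<lambda>N. \<Sum>p<N. f p"] by simp
qed

lemma dirichlet_poly_on_zero: "dirichlet_poly_on \<Omega> (\<lambda>x. 0)"
  unfolding dirichlet_poly_on_def by (rule exI[of _ 0]) simp

lemma dirichlet_poly_on_add:
  assumes "dirichlet_poly_on \<Omega> f" "dirichlet_poly_on \<Omega> g"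
  shows "dirichlet_poly_on \<Omega> (\<lambda>x. f x + g x)"
proof -
  obtain N1 c1 where f: "\<forall>s\<in>\<Omega>. f s = (\<Sum>n=1..N1. c1 n * npow n s)"
    using assms(1) unfolding dirichlet_poly_on_def by blast
  obtain N2 c2 where g: "\<forall>s\<in>\<Omega>. g s = (\<Sum>n=1..N2. c2 n * npow n s)"
    using assms(2) unfolding dirichlet_poly_on_def by blast
  define N where "N = max N1 N2"
  have pad: "(\<Sum>n=1..M. c n * npow n s) = (\<Sum>n=1..N. (if n \<le> M then c n else 0) * npow n s)"
    if "M \<le> N" for M c s
    using that by (intro sum.mono_neutral_cong_left) auto
  define c where "c n = (if n \<le> N1 then c1 n else 0) + (if n \<le> N2 then c2 n else 0)" for n
  have "\<forall>s\<in>\<Omega>. f s + g s = (\<Sum>n=1..N. c n * npow n s)"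
    using f g pad[of N1 c1] pad[of N2 c2] by (simp add: N_def c_def distrib_right sum.distrib)
  then show ?thesis unfolding dirichlet_poly_on_def by blast
qed

lemma dirichlet_poly_on_scale:
  assumes "dirichlet_poly_on \<Omega> f"
  shows "dirichlet_poly_on \<Omega> (\<lambda>x. c * f x)"
proof -
  obtain N c1 where "\<forall>s\<in>\<Omega>. f s = (\<Sum>n=1..N. c1 n * npow n s)"
    using assms unfolding dirichlet_poly_on_def by blast
  then have "\<forall>s\<in>\<Omega>. c * f s = (\<Sum>n=1..N. (\<lambda>n. c * c1 n) n * npow n s)"
    by (simp add: sum_distrib_left mult.assoc)
  then show ?thesis unfolding dirichlet_poly_on_def by (intro exI)
qed

lemma dirichlet_poly_on_sum:
  "finite S \<Longrightarrow> (\<And>e. e \<in> S \<Longrightarrow> dirichlet_poly_on \<Omega> e) \<Longrightarrow>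
     dirichlet_poly_on \<Omega> (\<lambda>x. \<Sum>e\<in>S. c e * e x)"
  by (induction S rule: finite_induct)
    (simp_all add: dirichlet_poly_on_zero dirichlet_poly_on_add dirichlet_poly_on_scale)

lemma dirichlet_poly_on_fspan:
  "(\<And>e. e \<in> B \<Longrightarrow> dirichlet_poly_on \<Omega> e) \<Longrightarrow> g \<in> fspan B \<Longrightarrow> dirichlet_poly_on \<Omega> g"
  unfolding fspan_def using dirichlet_poly_on_sum by blast

section \<open>Dirichlet series at real points\<close>

lemma dirichlet_coeff_bound:
  assumes "summable (\<lambda>p. b p * npow p (complex_of_real \<sigma>))"
  obtains C where "\<And>p. p \<ge> 1 \<Longrightarrow> norm (b p) \<le> C * real p powr \<sigma>"
proof -
  have "Bseq (\<lambda>p. b p * npow p (complex_of_real \<sigma>))"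
    using summable_LIMSEQ_zero[OF assms] by (rule convergent_imp_Bseq[OF convergentI])
  then obtain C where C: "\<And>p. norm (b p * npow p (complex_of_real \<sigma>)) \<le> C"
    unfolding Bseq_def by blast
  have "norm (b p) \<le> C * real p powr \<sigma>" if "p \<ge> 1" for p
  proof -
    have "norm (b p * npow p (complex_of_real \<sigma>)) = norm (b p) * real p powr (- \<sigma>)"
      by (simp add: npow_of_real norm_mult)
    then have "norm (b p) * real p powr (- \<sigma>) * real p powr \<sigma> \<le> C * real p powr \<sigma>"
      using C[of p] by (intro mult_right_mono) auto
    moreover have "real p powr (- \<sigma>) * real p powr \<sigma> = 1"
      using that by (simp add: powr_add[symmetric])
    ultimately show ?thesis by (simp add: mult.assoc)
  qed
  then show ?thesis using that by blast
qed

definition tail_zeta :: "nat \<Rightarrow> real" where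
  "tail_zeta n = (\<Sum>i. (real n / real (i + n + 1)) powr 2)"

lemma summable_tail_zeta: "summable (\<lambda>i. (real n / real (i + n + 1)) powr 2)"
proof -
  have "summable (\<lambda>i. real n powr 2 * real (i + (n + 1)) powr (- 2))"
    using summable_real_powr_iff[of "-2"] summable_iff_shift[of "\<lambda>i. real i powr -2" "n + 1"]
    by (intro summable_mult) simp
  moreover have "(real n / real (i + n + 1)) powr 2 = real n powr 2 * real (i + (n + 1)) powr (- 2)" for i
    by (simp add: powr_divide powr_minus divide_inverse add.assoc power_mult_distrib power_inverse)
  ultimately show ?thesis by simp
qed

lemma tail_zeta_nonneg: "tail_zeta n \<ge> 0"
  unfolding tail_zeta_def by (intro suminf_nonneg summable_tail_zeta) simp

definition dirichlet_tail :: "(nat \<Rightarrow> complex) \<Rightarrow> nat \<Rightarrow> real \<Rightarrow> complex" where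
  "dirichlet_tail b n t = (\<Sum>i. b (i + n) * npow (i + n) (complex_of_real t))"

lemma powr_ratio_split:
  fixes n m :: real
  assumes "n > 0" "m > 0"
  shows "m powr \<sigma> * (n powr t * m powr (- t)) = n powr \<sigma> * (n / m) powr (t - \<sigma>)"
proof -
  have a1: "(n / m) powr (t - \<sigma>) = n powr (t - \<sigma>) / m powr (t - \<sigma>)" by (rule powr_divide)
  have a2: "n powr t = n powr \<sigma> * n powr (t - \<sigma>)" by (subst powr_add[symmetric]) simp
  have a3: "m powr \<sigma> * m powr (- t) = 1 / m powr (t - \<sigma>)"
    using powr_minus[of m "t - \<sigma>"] by (subst powr_add[symmetric]) (simp add: divide_inverse)
  have "m powr \<sigma> * (n powr t * m powr (- t)) = (m powr \<sigma> * m powr (- t)) * n powr t"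
    by (simp add: ac_simps)
  also have "\<dots> = n powr t / m powr (t - \<sigma>)" using a3 by simp
  also have "\<dots> = n powr \<sigma> * (n powr (t - \<sigma>) / m powr (t - \<sigma>))" using a2 by simp
  also have "\<dots> = n powr \<sigma> * (n / m) powr (t - \<sigma>)" using a1 by simp
  finally show ?thesis .
qed

lemma dirichlet_summable_of_bound:
  assumes bound: "\<And>p. p \<ge> 1 \<Longrightarrow> norm (b p) \<le> C * real p powr \<sigma>" and t: "t \<ge> \<sigma> + 2"
  shows "summable (\<lambda>p. b p * npow p (complex_of_real t))"
proof -
  have C: "C \<ge> 0" using order_trans[OF norm_ge_zero bound[of 1]] by simp
  have term_bound: "norm (b p * npow p (complex_of_real t)) \<le> C * real p powr (- 2)" if "p \<ge> 1" for p
  proof -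
    have "norm (b p * npow p (complex_of_real t)) \<le> C * real p powr \<sigma> * real p powr (- t)"
      unfolding npow_of_real using bound[OF that] by (simp add: norm_mult mult_right_mono)
    also have "\<dots> = C * real p powr (\<sigma> - t)" by (simp add: powr_add[symmetric] mult.assoc)
    also have "\<dots> \<le> C * real p powr (- 2)" using that t C by (intro mult_left_mono powr_mono) auto
    finally show ?thesis .
  qed
  have "summable (\<lambda>p. C * real p powr (- 2))"
    using summable_real_powr_iff[of "-2"] by (intro summable_mult) simp
  then show ?thesis by (rule summable_comparison_test'[OF _ term_bound])
qed

lemma dirichlet_tail_minus_lead:
  assumes conv: "summable (\<lambda>p. b p * npow p (complex_of_real t))" and n: "n \<ge> 1"
  shows "complex_of_real (real n powr t) * dirichlet_tail b n t - b n =
      (\<Sum>i. complex_of_real (real n powr t) * (b (Suc i + n) * npow (Suc i + n) (complex_of_real t)))"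
proof -
  define f where "f p = b p * npow p (complex_of_real t)" for p
  have "summable (\<lambda>i. f (i + Suc n))"
    using conv unfolding f_def[abs_def] by (rule summable_iff_shift[THEN iffD2])
  then have sf: "summable (\<lambda>i. f (Suc i + n))" by simp
  then have "summable (\<lambda>i. f (i + n))" by (subst (asm) summable_Suc_iff) simp
  then have "(\<Sum>i. f (Suc i + n)) = (\<Sum>i. f (i + n)) - f n"
    using suminf_split_head[of "\<lambda>i. f (i + n)"] by simp
  moreover have "complex_of_real (real n powr t) * f n = b n"
    unfolding f_def npow_of_real using n by (simp add: powr_minus field_simps)
  ultimately show ?thesis
    using suminf_mult[OF sf, of "complex_of_real (real n powr t)"]
    unfolding dirichlet_tail_def f_def by (simp add: right_diff_distrib)
qed

text \<open>Each later term is damped by a factor \<open>(n / p) powr (t - \<sigma>)\<close> with \<open>p > n\<close>; two powers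
  of it pay for summability and the rest decays geometrically in \<open>t\<close>.\<close>

lemma dirichlet_tail_term_bound:
  fixes n :: nat
  assumes bound: "\<And>p. p \<ge> 1 \<Longrightarrow> norm (b p) \<le> C * real p powr \<sigma>"
    and n: "n \<ge> 1" and t: "t \<ge> \<sigma> + 2"
  defines "r \<equiv> real n / real (n + 1)"
  shows "norm (complex_of_real (real n powr t) * (b (Suc i + n) * npow (Suc i + n) (complex_of_real t)))
      \<le> C * real n powr \<sigma> * r powr (t - \<sigma> - 2) * (real n / real (i + n + 1)) powr 2"
proof -
  define m where "m = real (Suc i + n)"
  have C: "C \<ge> 0" using order_trans[OF norm_ge_zero bound[of 1]] by simp
  have m: "m > 0" "real n / m \<le> r" "0 \<le> real n / m" unfolding m_def r_def
    by (auto intro!: divide_left_mono)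
  have "norm (complex_of_real (real n powr t) * (b (Suc i + n) * npow (Suc i + n) (complex_of_real t)))
      \<le> real n powr t * (C * m powr \<sigma> * m powr (- t))"
    unfolding npow_of_real m_def using bound[of "Suc i + n"]
    by (simp add: norm_mult mult_left_mono mult_right_mono)
  also have "\<dots> = C * (real n powr \<sigma> * (real n / m) powr (t - \<sigma>))"
    using n m by (subst powr_ratio_split[symmetric]) (auto simp: ac_simps)
  also have "\<dots> \<le> C * (real n powr \<sigma> * (r powr (t - \<sigma> - 2) * (real n / m) powr 2))"
  proof -
    have "(real n / m) powr (t - \<sigma>) = (real n / m) powr (t - \<sigma> - 2) * (real n / m) powr 2"
      by (simp add: powr_add[symmetric])
    also have "\<dots> \<le> r powr (t - \<sigma> - 2) * (real n / m) powr 2"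
      using m t by (intro mult_right_mono powr_mono2) auto
    finally show ?thesis using C by (intro mult_left_mono) auto
  qed
  finally show ?thesis unfolding m_def by (simp add: ac_simps)
qed

lemma dirichlet_tail_estimate:
  assumes bound: "\<And>p. p \<ge> 1 \<Longrightarrow> norm (b p) \<le> C * real p powr \<sigma>"
    and n: "n \<ge> 1" and t: "t \<ge> \<sigma> + 2"
  shows "norm (complex_of_real (real n powr t) * dirichlet_tail b n t - b n)
           \<le> C * real n powr \<sigma> * tail_zeta n * (real n / real (n + 1)) powr (t - \<sigma> - 2)"
proof -
  define r where "r = real n / real (n + 1)"
  have "norm (complex_of_real (real n powr t) * dirichlet_tail b n t - b n) =
      norm (\<Sum>i. complex_of_real (real n powr t) * (b (Suc i + n) * npow (Suc i + n) (complex_of_real t)))"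
    using dirichlet_tail_minus_lead[OF dirichlet_summable_of_bound[OF bound t] n] by simp
  also have "\<dots> \<le> (\<Sum>i. C * real n powr \<sigma> * r powr (t - \<sigma> - 2) * (real n / real (i + n + 1)) powr 2)"
    unfolding r_def
    by (rule norm_suminf_le[OF dirichlet_tail_term_bound[OF bound n t]
          summable_mult[OF summable_tail_zeta]])
  also have "\<dots> = C * real n powr \<sigma> * tail_zeta n * r powr (t - \<sigma> - 2)"
    unfolding tail_zeta_def by (subst suminf_mult[OF summable_tail_zeta]) simp
  finally show ?thesis unfolding r_def .
qed

lemma dirichlet_tail_eq:
  assumes "(\<lambda>p. b p * npow p (complex_of_real t)) sums S"
  shows "dirichlet_tail b n t = S - (\<Sum>p\<in>{1..<n}. b p * npow p (complex_of_real t))"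
proof -
  have "(\<Sum>p<n. b p * npow p (complex_of_real t)) = (\<Sum>p\<in>{1..<n}. b p * npow p (complex_of_real t))"
    by (intro sum.mono_neutral_right) (auto simp: Suc_le_eq)
  then show ?thesis
    using suminf_split_initial_segment[OF sums_summable[OF assms], of n] sums_unique[OF assms]
    unfolding dirichlet_tail_def by simp
qed

lemma dirichlet_tail_scale:
  "summable (\<lambda>p. b p * npow p (complex_of_real t)) \<Longrightarrow>
     dirichlet_tail (\<lambda>p. c * b p) n t = c * dirichlet_tail b n t"
proof -
  assume "summable (\<lambda>p. b p * npow p (complex_of_real t))"
  then have "summable (\<lambda>i. b (i + n) * npow (i + n) (complex_of_real t))"
    using summable_iff_shift[of "\<lambda>p. b p * npow p (complex_of_real t)" n] by simp
  then show ?thesis unfolding dirichlet_tail_def by (simp add: suminf_mult[symmetric] ac_simps)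
qed

lemma dirichlet_tail_tendsto:
  assumes bound: "\<And>p. p \<ge> 1 \<Longrightarrow> norm (b p) \<le> C * real p powr \<sigma>" and n: "n \<ge> 1"
  shows "(\<lambda>q. complex_of_real (real n powr (\<sigma> + 2 + real q)) * dirichlet_tail b n (\<sigma> + 2 + real q))
           \<longlonglongrightarrow> b n"
proof -
  define r where "r = real n / real (n + 1)"
  have r: "0 < r" "r < 1" unfolding r_def using n by auto
  have tendsto: "(\<lambda>q. C * real n powr \<sigma> * tail_zeta n * r ^ q) \<longlonglongrightarrow> 0"
    using r tendsto_mult_right_zero[OF LIMSEQ_power_zero[of r]] by simp
  have "\<forall>q. norm (complex_of_real (real n powr (\<sigma> + 2 + real q)) *
      dirichlet_tail b n (\<sigma> + 2 + real q) - b n) \<le> C * real n powr \<sigma> * tail_zeta n * r ^ q"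
  proof
    fix q :: nat
    have "r powr (\<sigma> + 2 + real q - \<sigma> - 2) = r ^ q"
      using r by (simp add: powr_realpow)
    then show "norm (complex_of_real (real n powr (\<sigma> + 2 + real q)) *
        dirichlet_tail b n (\<sigma> + 2 + real q) - b n) \<le> C * real n powr \<sigma> * tail_zeta n * r ^ q"
      using dirichlet_tail_estimate[OF bound n, of "\<sigma> + 2 + real q"] unfolding r_def by simp
  qed
  then have "(\<lambda>q. complex_of_real (real n powr (\<sigma> + 2 + real q)) * dirichlet_tail b n (\<sigma> + 2 + real q)
      - b n) \<longlonglongrightarrow> 0"
    by (rule Lim_null_comparison[OF always_eventually]) (use tendsto in simp)
  then show ?thesis by (simp add: LIM_zero_iff)
qed

lemma dirichlet_remainder_tendsto:
  assumes bound: "\<And>p. p \<ge> 1 \<Longrightarrow> norm (b p) \<le> C * real p powr \<sigma>" and n: "n \<ge> 1"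
    and S: "\<And>q. (\<lambda>p. b p * npow p (complex_of_real (\<sigma> + 2 + real q))) sums S q"
  shows "(\<lambda>q. complex_of_real (real n powr (\<sigma> + 2 + real q)) *
      (S q - (\<Sum>p\<in>{1..<n}. b p * npow p (complex_of_real (\<sigma> + 2 + real q))))) \<longlonglongrightarrow> b n"
  using dirichlet_tail_tendsto[OF bound n] dirichlet_tail_eq[OF S] by simp

section \<open>Banded Dirichlet series kernels\<close>

definition col_poly :: "(nat \<Rightarrow> nat \<Rightarrow> complex) \<Rightarrow> nat \<Rightarrow> nat \<Rightarrow> complex \<Rightarrow> complex" where
  "col_poly a k n s = (\<Sum>m=1..n+k. a m n * npow m s)"

definition row_poly :: "(nat \<Rightarrow> nat \<Rightarrow> complex) \<Rightarrow> nat \<Rightarrow> nat \<Rightarrow> complex \<Rightarrow> complex" where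
  "row_poly a k m u = (\<Sum>n=1..m+k. a m n * npow n u)"

lemma k_diagonal_below: "k_diagonal k a \<Longrightarrow> m > n + k \<Longrightarrow> a m n = 0"
  unfolding k_diagonal_def by auto

lemma k_diagonal_above: "k_diagonal k a \<Longrightarrow> n > m + k \<Longrightarrow> a m n = 0"
  unfolding k_diagonal_def by auto

lemma col_poly_sums:
  assumes "k_diagonal k a"
  shows "(\<lambda>m. a m n * npow m s) sums col_poly a k n s"
  unfolding col_poly_def using k_diagonal_below[OF assms]
  by (intro sums_finite) (auto simp: not_le Suc_le_eq)

lemma row_poly_sums:
  assumes "k_diagonal k a"
  shows "(\<lambda>n. a m n * npow n u) sums row_poly a k m u"
  unfolding row_poly_def using k_diagonal_above[OF assms]
  by (intro sums_finite) (auto simp: not_le Suc_le_eq)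

lemma symbol_eq_col_poly:
  assumes "k_diagonal k a"
  shows "symbol a n s = col_poly a k n s"
proof -
  have "(\<lambda>m. a (Suc m) n * npow (Suc m) s) sums (col_poly a k n s - a 0 n * npow 0 s)"
    using col_poly_sums[OF assms] by (subst sums_Suc_iff) simp
  then show ?thesis unfolding symbol_def by (simp add: sums_iff)
qed

lemma dirichlet_poly_on_col_poly: "dirichlet_poly_on \<Omega> (col_poly a k n)"
  unfolding dirichlet_poly_on_def col_poly_def by (intro exI[of _ "n + k"] exI[of _ "\<lambda>m. a m n"]) simp

lemma dpsum_eq_col_sum:
  assumes "k_diagonal k a" "N + k \<le> M"
  shows "dpsum a s w (M, N) = (\<Sum>n=1..N. col_poly a k n s * npow n w)"
proof -
  have "dpsum a s w (M, N) = (\<Sum>n=1..N. (\<Sum>m=1..M. a m n * npow m s) * npow n w)"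
    unfolding dpsum_def by (simp only: split sum.swap[of _ "{1..M}"] sum_distrib_right)
  also have "\<dots> = (\<Sum>n=1..N. col_poly a k n s * npow n w)"
    unfolding col_poly_def using assms k_diagonal_below[OF assms(1)]
    by (intro sum.cong refl arg_cong2[where f = "(*)"] sum.mono_neutral_right) auto
  finally show ?thesis .
qed

lemma dpsum_eq_row_sum:
  assumes "k_diagonal k a" "M + k \<le> N"
  shows "dpsum a s w (M, N) = (\<Sum>m=1..M. row_poly a k m w * npow m s)"
proof -
  have "dpsum a s w (M, N) = (\<Sum>m=1..M. (\<Sum>n=1..N. a m n * npow n w) * npow m s)"
    unfolding dpsum_def by (simp only: split sum_distrib_right mult.assoc mult.commute[of "npow _ s"])
  also have "\<dots> = (\<Sum>m=1..M. row_poly a k m w * npow m s)"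
    unfolding row_poly_def using assms k_diagonal_above[OF assms(1)]
    by (intro sum.cong refl arg_cong2[where f = "(*)"] sum.mono_neutral_right) auto
  finally show ?thesis .
qed

lemma cnj_in_halfplane: "u \<in> halfplane \<rho> \<Longrightarrow> cnj u \<in> halfplane \<rho>"
  unfolding halfplane_def by simp

lemma dkernel_tendsto:
  assumes "dirichlet_series_kernel \<rho> a" "s \<in> halfplane \<rho>" "u \<in> halfplane \<rho>"
  shows "(dpsum a s (cnj u) \<longlongrightarrow> dkernel a s u) (sequentially \<times>\<^sub>F sequentially)"
proof -
  obtain L where L: "(dpsum a s (cnj u) \<longlongrightarrow> L) (sequentially \<times>\<^sub>F sequentially)"
    using assms cnj_in_halfplane
    unfolding dirichlet_series_kernel_def regularly_convergent_at_def by blast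
  moreover have "dkernel a s u = L"
    unfolding dkernel_def using L by (intro tendsto_Lim) (simp_all add: prod_filter_eq_bot)
  ultimately show ?thesis by simp
qed

lemma dkernel_tendsto_along:
  assumes "dirichlet_series_kernel \<rho> a" "s \<in> halfplane \<rho>" "u \<in> halfplane \<rho>"
    and "filterlim f sequentially sequentially" "filterlim g sequentially sequentially"
  shows "(\<lambda>N. dpsum a s (cnj u) (f N, g N)) \<longlonglongrightarrow> dkernel a s u"
  using filterlim_compose[OF dkernel_tendsto[OF assms(1-3)] filterlim_Pair[OF assms(4,5)]] by simp

lemma dkernel_col_expansion:
  assumes "dirichlet_series_kernel \<rho> a" "k_diagonal k a" "s \<in> halfplane \<rho>" "u \<in> halfplane \<rho>"
  shows "(\<lambda>n. col_poly a k n s * npow n (cnj u)) sums dkernel a s u"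
  using dkernel_tendsto_along[OF assms(1,3,4) filterlim_add_const_nat_at_top filterlim_ident, of k]
  by (simp add: dpsum_eq_col_sum[OF assms(2)] sums_iff_atLeastAtMost)

lemma dkernel_row_expansion:
  assumes "dirichlet_series_kernel \<rho> a" "k_diagonal k a" "s \<in> halfplane \<rho>" "u \<in> halfplane \<rho>"
  shows "(\<lambda>m. row_poly a k m (cnj u) * npow m s) sums dkernel a s u"
  using dkernel_tendsto_along[OF assms(1,3,4) filterlim_ident filterlim_add_const_nat_at_top, of k]
  by (simp add: dpsum_eq_row_sum[OF assms(2)] sums_iff_atLeastAtMost)

lemma dpsum_Suc_Suc:
  "dpsum a s u (Suc M, Suc N) - dpsum a s u (M, Suc N) - dpsum a s u (Suc M, N) + dpsum a s u (M, N)
     = a (Suc M) (Suc N) * npow (Suc M) s * npow (Suc N) u"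
  unfolding dpsum_def by (simp add: sum.distrib)

text \<open>Each term is a second difference of the partial sums.\<close>

lemma dpsum_terms_eventually_bounded:
  assumes "(dpsum a s u \<longlongrightarrow> L) (sequentially \<times>\<^sub>F sequentially)"
  obtains N0 where "\<And>m p. m > N0 \<Longrightarrow> p > N0 \<Longrightarrow> norm (a m p * npow m s * npow p u) \<le> 1"
proof -
  define D where "D = dpsum a s u"
  have "eventually (\<lambda>x. dist (D x) L < 1/4) (sequentially \<times>\<^sub>F sequentially)"
    using assms unfolding D_def by (rule tendstoD) simp
  then obtain N0 where N0: "\<And>M N. M \<ge> N0 \<Longrightarrow> N \<ge> N0 \<Longrightarrow> norm (D (M, N) - L) < 1/4"
    unfolding eventually_prod_sequentially dist_norm by blast
  have "norm (a m p * npow m s * npow p u) \<le> 1" if "m > N0" "p > N0" for m p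
  proof -
    define M N where "M = m - 1" and "N = p - 1"
    have MN: "m = Suc M" "p = Suc N" "M \<ge> N0" "N \<ge> N0" using that unfolding M_def N_def by auto
    have "a m p * npow m s * npow p u =
        (D (Suc M, Suc N) - L) - (D (M, Suc N) - L) - (D (Suc M, N) - L) + (D (M, N) - L)"
      unfolding MN(1,2) D_def dpsum_Suc_Suc[symmetric] by simp
    also have "norm \<dots> \<le> norm (D (Suc M, Suc N) - L) + norm (D (M, Suc N) - L)
        + norm (D (Suc M, N) - L) + norm (D (M, N) - L)"
      by (intro order.trans[OF norm_triangle_ineq] add_mono order.trans[OF norm_triangle_ineq4]
          order_refl)
    also have "\<dots> \<le> 1"
      using N0[of "Suc M" "Suc N"] N0[of M "Suc N"] N0[of "Suc M" N] N0[of M N] MN by simp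
    finally show ?thesis .
  qed
  then show ?thesis using that by blast
qed

text \<open>Outside the square \<open>N0 \<times> N0\<close> bandedness leaves only finitely many nonzero terms.\<close>

lemma banded_bounded_if_eventually_bounded:
  fixes T :: "nat \<Rightarrow> nat \<Rightarrow> 'a::real_normed_vector"
  assumes banded: "\<And>m p. m > p + k \<or> p > m + k \<Longrightarrow> T m p = 0"
    and eventually: "\<And>m p. m > N0 \<Longrightarrow> p > N0 \<Longrightarrow> norm (T m p) \<le> 1"
  obtains C where "\<And>m p. norm (T m p) \<le> C"
proof -
  define C where "C = 1 + (\<Sum>m\<le>N0+k. \<Sum>p\<le>N0+k. norm (T m p))"
  have "norm (T m p) \<le> C" for m p
  proof (cases "m > N0 \<and> p > N0")
    case True
    have "0 \<le> (\<Sum>m\<le>N0+k. \<Sum>p\<le>N0+k. norm (T m p))" by (intro sum_nonneg) auto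
    then show ?thesis using eventually True unfolding C_def by fastforce
  next
    case False
    show ?thesis
    proof (cases "m \<le> N0 + k \<and> p \<le> N0 + k")
      case True
      then have "norm (T m p) \<le> (\<Sum>p'\<le>N0+k. norm (T m p'))"
        by (intro member_le_sum) auto
      also have "\<dots> \<le> (\<Sum>m'\<le>N0+k. \<Sum>p'\<le>N0+k. norm (T m' p'))"
        using True by (intro member_le_sum[of m "{..N0+k}" "\<lambda>m. \<Sum>p'\<le>N0+k. norm (T m p')"])
          (auto intro: sum_nonneg)
      finally show ?thesis unfolding C_def by simp
    next
      case False
      then have "T m p = 0" using \<open>\<not> (m > N0 \<and> p > N0)\<close> banded by auto
      then show ?thesis unfolding C_def by (simp add: add_nonneg_nonneg sum_nonneg)
    qed
  qed
  then show ?thesis using that by blast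
qed

lemma banded_coeff_bound:
  assumes "dirichlet_series_kernel \<rho> a" "k_diagonal k a" "\<sigma> > \<rho>"
  obtains C where "\<And>m p. m \<ge> 1 \<Longrightarrow> p \<ge> 1 \<Longrightarrow> norm (a m p) \<le> C * real m powr \<sigma> * real p powr \<sigma>"
proof -
  define w where "w = complex_of_real \<sigma>"
  define T where "T m p = a m p * npow m w * npow p w" for m p
  have "w \<in> halfplane \<rho>" unfolding w_def halfplane_def using assms by simp
  then have "(dpsum a w w \<longlongrightarrow> dkernel a w w) (sequentially \<times>\<^sub>F sequentially)"
    using dkernel_tendsto[OF assms(1)] unfolding w_def by (metis complex_cnj_complex_of_real)
  then obtain N0 where "\<And>m p. m > N0 \<Longrightarrow> p > N0 \<Longrightarrow> norm (T m p) \<le> 1"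
    unfolding T_def by (rule dpsum_terms_eventually_bounded) blast
  moreover have "T m p = 0" if "m > p + k \<or> p > m + k" for m p
    using that k_diagonal_below[OF assms(2)] k_diagonal_above[OF assms(2)] unfolding T_def by auto
  ultimately obtain C where T_bound: "\<And>m p. norm (T m p) \<le> C"
    using banded_bounded_if_eventually_bounded by metis
  have "norm (a m p) \<le> C * real m powr \<sigma> * real p powr \<sigma>" if "m \<ge> 1" "p \<ge> 1" for m p
  proof -
    have "norm (T m p) = norm (a m p) * real m powr (- \<sigma>) * real p powr (- \<sigma>)"
      unfolding T_def w_def npow_of_real by (simp add: norm_mult)
    moreover have "real m powr (- \<sigma>) * real m powr \<sigma> = 1" "real p powr (- \<sigma>) * real p powr \<sigma> = 1"
      using that by (simp_all add: powr_add[symmetric])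
    ultimately have "norm (a m p) = norm (T m p) * real m powr \<sigma> * real p powr \<sigma>"
      by (metis (no_types, lifting) mult.assoc mult.commute mult_1)
    also have "\<dots> \<le> C * real m powr \<sigma> * real p powr \<sigma>"
      using T_bound[of m p] by (intro mult_right_mono) auto
    finally show ?thesis .
  qed
  then show ?thesis using that by blast
qed

section \<open>The symbols as elements of the space\<close>

locale banded_dirichlet_rkhs = rkhs_space "halfplane \<rho>" H ip "dkernel a"
  for \<rho> :: real and H :: "(complex \<Rightarrow> complex) set" and ip and a :: "nat \<Rightarrow> nat \<Rightarrow> complex" +
  fixes k :: nat
  assumes kernel: "dirichlet_series_kernel \<rho> a" and banded: "k_diagonal k a"
begin

definition \<sigma>\<^sub>0 :: real where "\<sigma>\<^sub>0 = \<rho> + 1"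

text \<open>The symbols \<open>A n\<close> are recovered from kernel functions at the real points \<open>\<tau> q \<rightarrow> \<infinity>\<close>.\<close>

definition \<tau> :: "nat \<Rightarrow> real" where "\<tau> q = \<sigma>\<^sub>0 + 2 + real q"

definition kernel_at :: "nat \<Rightarrow> complex \<Rightarrow> complex" where
  "kernel_at q = kfun (halfplane \<rho>) (dkernel a) (complex_of_real (\<tau> q))"

definition A :: "nat \<Rightarrow> complex \<Rightarrow> complex" where
  "A n = (\<lambda>s. if s \<in> halfplane \<rho> then col_poly a k n s else 0)"

definition pw :: "nat \<Rightarrow> nat \<Rightarrow> complex" where
  "pw q p = npow p (complex_of_real (\<tau> q))"

definition lead :: "nat \<Rightarrow> nat \<Rightarrow> complex" where
  "lead n q = complex_of_real (real n powr \<tau> q)"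

lemma of_real_in_halfplane: "x > \<rho> \<Longrightarrow> complex_of_real x \<in> halfplane \<rho>"
  unfolding halfplane_def by simp

lemma \<tau>_in_halfplane: "complex_of_real (\<tau> q) \<in> halfplane \<rho>"
  unfolding \<tau>_def \<sigma>\<^sub>0_def by (intro of_real_in_halfplane) simp

lemma kernel_at_mem: "kernel_at q \<in> H"
  unfolding kernel_at_def using kfun_mem \<tau>_in_halfplane by blast

lemma ip_kernel_at_kernel_at:
  "ip (kernel_at q) (kernel_at l) = dkernel a (complex_of_real (\<tau> l)) (complex_of_real (\<tau> q))"
  using reproducing[OF \<tau>_in_halfplane[of l] kernel_at_mem[of q]] \<tau>_in_halfplane[of l]
  unfolding kernel_at_def kfun_def by simp

lemma ip_A_kernel_at: "A i \<in> H \<Longrightarrow> ip (A i) (kernel_at l) = col_poly a k i (complex_of_real (\<tau> l))"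
  using reproducing[OF \<tau>_in_halfplane[of l], of "A i"] \<tau>_in_halfplane[of l]
  unfolding kernel_at_def A_def by simp

lemma cnj_pw [simp]: "cnj (pw q p) = pw q p"
  unfolding pw_def npow_of_real by simp

lemma cnj_lead [simp]: "cnj (lead n q) = lead n q"
  unfolding lead_def by simp

definition symbols_known :: "nat \<Rightarrow> bool" where
  "symbols_known n \<longleftrightarrow>
     (\<forall>j\<in>{1..<n}. A j \<in> H \<and> (\<forall>q. ip (kernel_at q) (A j) = row_poly a k j (complex_of_real (\<tau> q)))) \<and>
     (\<forall>i\<in>{1..<n}. \<forall>j\<in>{1..<n}. ip (A i) (A j) = a j i)"

text \<open>\<open>approx n q\<close> peels the first \<open>n - 1\<close> symbols off the expansion
  \<open>kernel_at q = \<Sum>\<^sub>p pw q p * A p\<close> and rescales, so that \<open>A n\<close> dominates.\<close>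

definition peeled :: "nat \<Rightarrow> nat \<Rightarrow> complex \<Rightarrow> complex" where
  "peeled n q = (\<lambda>x. \<Sum>i\<in>{1..<n}. pw q i * A i x)"

definition approx :: "nat \<Rightarrow> nat \<Rightarrow> complex \<Rightarrow> complex" where
  "approx n q = (\<lambda>x. lead n q * (kernel_at q x - peeled n q x))"

definition coeff_tail :: "nat \<Rightarrow> nat \<Rightarrow> nat \<Rightarrow> complex" where
  "coeff_tail n l p = lead n l * dirichlet_tail (\<lambda>m. a m p) n (\<tau> l)"

context
  fixes n :: nat
  assumes n: "n \<ge> 1" and known: "symbols_known n"
begin

lemma A_below_mem: "j \<in> {1..<n} \<Longrightarrow> A j \<in> H"
  using known unfolding symbols_known_def by blast

lemma ip_kernel_at_A_below:
  "j \<in> {1..<n} \<Longrightarrow> ip (kernel_at q) (A j) = row_poly a k j (complex_of_real (\<tau> q))"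
  using known unfolding symbols_known_def by blast

lemma ip_A_A_below: "i \<in> {1..<n} \<Longrightarrow> j \<in> {1..<n} \<Longrightarrow> ip (A i) (A j) = a j i"
  using known unfolding symbols_known_def by blast

lemma peeled_mem: "peeled n q \<in> H"
  unfolding peeled_def using A_below_mem by (intro sum_mem) auto

lemma approx_mem: "approx n q \<in> H"
  unfolding approx_def using kernel_at_mem peeled_mem by (intro scale_mem diff_mem)

lemma ip_kernel_at_peeled:
  "ip (kernel_at q) (peeled n l) = (\<Sum>j\<in>{1..<n}. pw l j * row_poly a k j (complex_of_real (\<tau> q)))"
  unfolding peeled_def using A_below_mem kernel_at_mem
  by (subst ip_sum_right) (auto simp: ip_kernel_at_A_below)

lemma ip_peeled_kernel_at:
  "ip (peeled n q) (kernel_at l) = (\<Sum>i\<in>{1..<n}. pw q i * col_poly a k i (complex_of_real (\<tau> l)))"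
  unfolding peeled_def using A_below_mem kernel_at_mem
  by (subst ip_sum_left) (auto simp: ip_A_kernel_at)

lemma ip_A_peeled:
  assumes "A i \<in> H" "\<And>j. j \<in> {1..<n} \<Longrightarrow> ip (A i) (A j) = a j i"
  shows "ip (A i) (peeled n l) = (\<Sum>j\<in>{1..<n}. a j i * pw l j)"
  unfolding peeled_def using assms A_below_mem by (subst ip_sum_right) (auto simp: ac_simps)

lemma ip_peeled_peeled:
  "ip (peeled n q) (peeled n l) = (\<Sum>i\<in>{1..<n}. pw q i * (\<Sum>j\<in>{1..<n}. a j i * pw l j))"
proof -
  have "ip (peeled n q) (peeled n l) = (\<Sum>i\<in>{1..<n}. pw q i * ip (A i) (peeled n l))"
    unfolding peeled_def[of n q] using A_below_mem peeled_mem by (intro ip_sum_left) auto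
  also have "\<dots> = (\<Sum>i\<in>{1..<n}. pw q i * (\<Sum>j\<in>{1..<n}. a j i * pw l j))"
    using ip_A_peeled[OF A_below_mem ip_A_A_below] by simp
  finally show ?thesis .
qed

lemma coeff_tail_eq:
  "coeff_tail n l p = lead n l * (col_poly a k p (complex_of_real (\<tau> l)) - (\<Sum>j\<in>{1..<n}. a j p * pw l j))"
  using dirichlet_tail_eq[OF col_poly_sums[OF banded]] unfolding coeff_tail_def pw_def by simp

lemma ip_approx_approx:
  "ip (approx n q) (approx n l) = lead n q * dirichlet_tail (coeff_tail n l) n (\<tau> q)"
proof -
  define t r where "t = complex_of_real (\<tau> l)" and "r = complex_of_real (\<tau> q)"
  define c where "c p = col_poly a k p t - (\<Sum>j\<in>{1..<n}. a j p * pw l j)" for p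
  have "(\<lambda>p. col_poly a k p t * pw q p) sums dkernel a t r"
    using dkernel_col_expansion[OF kernel banded, of t r] \<tau>_in_halfplane unfolding t_def r_def pw_def
    by simp
  moreover have "(\<lambda>p. \<Sum>j\<in>{1..<n}. pw l j * (a j p * pw q p)) sums
      (\<Sum>j\<in>{1..<n}. pw l j * row_poly a k j r)"
    using row_poly_sums[OF banded] unfolding pw_def r_def by (intro sums_sum sums_mult) auto
  moreover have "c p * pw q p = col_poly a k p t * pw q p - (\<Sum>j\<in>{1..<n}. pw l j * (a j p * pw q p))"
    for p unfolding c_def by (simp add: algebra_simps sum_distrib_left)
  ultimately have "(\<lambda>p. c p * pw q p) sums (dkernel a t r - (\<Sum>j\<in>{1..<n}. pw l j * row_poly a k j r))"
    by (simp add: sums_diff)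
  then have summable: "summable (\<lambda>p. c p * npow p (complex_of_real (\<tau> q)))"
    and tail: "dirichlet_tail c n (\<tau> q) = dkernel a t r - (\<Sum>j\<in>{1..<n}. pw l j * row_poly a k j r)
        - (\<Sum>i\<in>{1..<n}. c i * pw q i)"
    using dirichlet_tail_eq[of c "\<tau> q"] sums_summable unfolding pw_def by auto
  have "ip (approx n q) (approx n l) = lead n q * lead n l *
      (ip (kernel_at q) (kernel_at l) - ip (kernel_at q) (peeled n l) - ip (peeled n q) (kernel_at l)
        + ip (peeled n q) (peeled n l))"
    unfolding approx_def using kernel_at_mem peeled_mem by (simp add: ip_scaled_diffs)
  \<comment> \<open>The terms below \<open>n\<close> of the series for \<open>c\<close> are exactly the peeled inner products.\<close>
  also have "\<dots> = lead n q * (lead n l * dirichlet_tail c n (\<tau> q))"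
    unfolding tail ip_kernel_at_kernel_at ip_kernel_at_peeled ip_peeled_kernel_at ip_peeled_peeled
      c_def t_def r_def
    by (simp add: algebra_simps sum_subtractf sum_distrib_left)
  also have "lead n l * dirichlet_tail c n (\<tau> q) = dirichlet_tail (coeff_tail n l) n (\<tau> q)"
    using dirichlet_tail_scale[OF summable] unfolding coeff_tail_eq c_def t_def by simp
  finally show ?thesis .
qed

lemma approx_tendsto_pointwise:
  assumes s: "s \<in> halfplane \<rho>"
  shows "(\<lambda>q. approx n q s) \<longlonglongrightarrow> A n s"
proof -
  have col: "(\<lambda>p. col_poly a k p s * npow p (complex_of_real x)) sums dkernel a s (complex_of_real x)"
    if "x > \<rho>" for x
    using dkernel_col_expansion[OF kernel banded s of_real_in_halfplane[OF that]] by simp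
  have "summable (\<lambda>p. col_poly a k p s * npow p (complex_of_real \<sigma>\<^sub>0))"
    using sums_summable[OF col[of "\<sigma>\<^sub>0"]] unfolding \<sigma>\<^sub>0_def by simp
  then obtain C where C: "\<And>p. p \<ge> 1 \<Longrightarrow> norm (col_poly a k p s) \<le> C * real p powr \<sigma>\<^sub>0"
    by (rule dirichlet_coeff_bound) blast
  have "(\<lambda>q. complex_of_real (real n powr (\<sigma>\<^sub>0 + 2 + real q)) * (dkernel a s (complex_of_real (\<tau> q))
      - (\<Sum>p\<in>{1..<n}. col_poly a k p s * npow p (complex_of_real (\<sigma>\<^sub>0 + 2 + real q))))) \<longlonglongrightarrow> A n s"
    using dirichlet_remainder_tendsto[OF C n col] s unfolding A_def \<tau>_def \<sigma>\<^sub>0_def by simp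
  then show ?thesis
    using s unfolding approx_def peeled_def kernel_at_def kfun_def A_def lead_def pw_def \<tau>_def
    by (simp add: ac_simps)
qed

context
  fixes C :: real
  assumes coeff_bound: "\<And>m p. m \<ge> 1 \<Longrightarrow> p \<ge> 1 \<Longrightarrow> norm (a m p) \<le> C * real m powr \<sigma>\<^sub>0 * real p powr \<sigma>\<^sub>0"
begin

definition ratio :: real where "ratio = real n / real (n + 1)"

lemma ratio_powr_\<tau>: "ratio powr (\<tau> l - \<sigma>\<^sub>0 - 2) = ratio ^ l"
  unfolding \<tau>_def ratio_def using n by (simp add: powr_realpow)

lemma ratio_pos: "0 < ratio" and ratio_less_1: "ratio < 1"
  unfolding ratio_def using n by auto

lemma C_nonneg: "C \<ge> 0"
  using order_trans[OF norm_ge_zero coeff_bound[of 1 1]] by simp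

lemma coeff_tail_near:
  assumes "p \<ge> 1"
  shows "norm (coeff_tail n l p - a n p) \<le> C * real p powr \<sigma>\<^sub>0 * real n powr \<sigma>\<^sub>0 * tail_zeta n * ratio ^ l"
proof -
  have "\<And>m. m \<ge> 1 \<Longrightarrow> norm (a m p) \<le> (C * real p powr \<sigma>\<^sub>0) * real m powr \<sigma>\<^sub>0"
    using coeff_bound assms by (simp add: ac_simps)
  from dirichlet_tail_estimate[OF this n, of "\<tau> l"] show ?thesis
    unfolding coeff_tail_def lead_def ratio_def[symmetric] ratio_powr_\<tau> by (simp add: \<tau>_def)
qed

definition C_tail :: real where "C_tail = C * real n powr \<sigma>\<^sub>0 * (1 + tail_zeta n)"

lemma coeff_tail_bound:
  assumes "p \<ge> 1"
  shows "norm (coeff_tail n l p) \<le> C_tail * real p powr \<sigma>\<^sub>0"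
proof -
  have "C * real p powr \<sigma>\<^sub>0 * real n powr \<sigma>\<^sub>0 * tail_zeta n * ratio ^ l
      \<le> C * real p powr \<sigma>\<^sub>0 * real n powr \<sigma>\<^sub>0 * tail_zeta n"
    using C_nonneg tail_zeta_nonneg ratio_pos ratio_less_1
    by (intro mult_left_le) (auto intro: power_le_one)
  then have "norm (coeff_tail n l p) \<le> norm (a n p) + C * real p powr \<sigma>\<^sub>0 * real n powr \<sigma>\<^sub>0 * tail_zeta n"
    using coeff_tail_near[OF assms, of l] norm_triangle_ineq2[of "coeff_tail n l p" "a n p"] by linarith
  also have "\<dots> \<le> C_tail * real p powr \<sigma>\<^sub>0"
    using coeff_bound[OF n assms] unfolding C_tail_def by (simp add: algebra_simps)
  finally show ?thesis .
qed

lemma ip_approx_approx_near: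
  "norm (ip (approx n q) (approx n l) - a n n) \<le>
     (C_tail + C * real n powr \<sigma>\<^sub>0) * real n powr \<sigma>\<^sub>0 * tail_zeta n * (ratio ^ q + ratio ^ l)"
proof -
  have "norm (ip (approx n q) (approx n l) - coeff_tail n l n) \<le>
      C_tail * real n powr \<sigma>\<^sub>0 * tail_zeta n * ratio ^ q"
    using dirichlet_tail_estimate[OF coeff_tail_bound n, of "\<tau> q"]
    unfolding ip_approx_approx lead_def ratio_def[symmetric] ratio_powr_\<tau> by (simp add: \<tau>_def)
  moreover have "norm (coeff_tail n l n - a n n) \<le> C * real n powr \<sigma>\<^sub>0 * real n powr \<sigma>\<^sub>0 * tail_zeta n * ratio ^ l"
    by (rule coeff_tail_near[OF n])
  moreover have "0 \<le> C_tail * real n powr \<sigma>\<^sub>0 * tail_zeta n * ratio ^ l"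
    "0 \<le> C * real n powr \<sigma>\<^sub>0 * real n powr \<sigma>\<^sub>0 * tail_zeta n * ratio ^ q"
    using C_nonneg tail_zeta_nonneg ratio_pos unfolding C_tail_def by simp_all
  ultimately show ?thesis
    using norm_triangle_ineq[of "ip (approx n q) (approx n l) - coeff_tail n l n" "coeff_tail n l n - a n n"]
    by (simp add: algebra_simps)
qed

lemma approx_Cauchy: "\<forall>e>0. \<exists>N. \<forall>m\<ge>N. \<forall>l\<ge>N. dist_H (approx n m) (approx n l) < e"
proof (rule Cauchy_of_ip_bound[OF approx_mem])
  show "norm (ip (approx n q) (approx n l) - a n n) \<le>
      (C_tail + C * real n powr \<sigma>\<^sub>0) * real n powr \<sigma>\<^sub>0 * tail_zeta n * ratio ^ q +
      (C_tail + C * real n powr \<sigma>\<^sub>0) * real n powr \<sigma>\<^sub>0 * tail_zeta n * ratio ^ l" for q l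
    using ip_approx_approx_near[of q l] by (simp add: algebra_simps)
  show "(\<lambda>q. (C_tail + C * real n powr \<sigma>\<^sub>0) * real n powr \<sigma>\<^sub>0 * tail_zeta n * ratio ^ q) \<longlonglongrightarrow> 0"
    using ratio_pos ratio_less_1 by (intro tendsto_mult_right_zero LIMSEQ_power_zero) auto
qed

lemma A_mem_and_approx_tendsto: "A n \<in> H \<and> (\<lambda>q. dist_H (approx n q) (A n)) \<longlonglongrightarrow> 0"
proof -
  obtain h where h: "h \<in> H" "(\<lambda>q. dist_H (approx n q) h) \<longlonglongrightarrow> 0"
    using Cauchy_has_limit[of "approx n", OF approx_mem approx_Cauchy] by blast
  moreover have "h = A n"
    using approx_mem h approx_tendsto_pointwise
  proof (rule norm_limit_eq_pointwise_limit)
    show "A n x = 0" if "x \<notin> halfplane \<rho>" for x using that by (simp add: A_def)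
  qed
  ultimately show ?thesis by simp
qed

lemma A_n_mem: "A n \<in> H"
  using A_mem_and_approx_tendsto by blast

lemma approx_tendsto: "(\<lambda>q. dist_H (approx n q) (A n)) \<longlonglongrightarrow> 0"
  using A_mem_and_approx_tendsto by blast

lemma ip_approx_right:
  "f \<in> H \<Longrightarrow> ip f (approx n l) = lead n l * (ip f (kernel_at l) - ip f (peeled n l))"
  unfolding approx_def using kernel_at_mem peeled_mem
  by (simp add: ip_scale_right ip_diff_right diff_mem)

lemma ip_approx_left:
  "g \<in> H \<Longrightarrow> ip (approx n l) g = lead n l * (ip (kernel_at l) g - ip (peeled n l) g)"
  unfolding approx_def using kernel_at_mem peeled_mem
  by (simp add: ip_scale_left ip_diff_left diff_mem)

lemma ip_kernel_at_A: "ip (kernel_at q) (A n) = row_poly a k n (complex_of_real (\<tau> q))"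
proof -
  define u where "u = complex_of_real (\<tau> q)"
  have row: "(\<lambda>m. row_poly a k m u * npow m (complex_of_real x)) sums dkernel a (complex_of_real x) u"
    if "x > \<rho>" for x
    using dkernel_row_expansion[OF kernel banded of_real_in_halfplane[OF that] \<tau>_in_halfplane]
    unfolding u_def by simp
  have "summable (\<lambda>m. row_poly a k m u * npow m (complex_of_real \<sigma>\<^sub>0))"
    using sums_summable[OF row[of "\<sigma>\<^sub>0"]] unfolding \<sigma>\<^sub>0_def by simp
  then obtain C where C: "\<And>m. m \<ge> 1 \<Longrightarrow> norm (row_poly a k m u) \<le> C * real m powr \<sigma>\<^sub>0"
    by (rule dirichlet_coeff_bound) blast
  have "(\<lambda>l. ip (kernel_at q) (approx n l)) \<longlonglongrightarrow> ip (kernel_at q) (A n)"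
    using approx_mem A_n_mem kernel_at_mem approx_tendsto by (rule ip_tendsto_right)
  moreover have "ip (kernel_at q) (approx n l) =
      lead n l * (dkernel a (complex_of_real (\<tau> l)) u - (\<Sum>j\<in>{1..<n}. row_poly a k j u * pw l j))" for l
    unfolding ip_approx_right[OF kernel_at_mem] ip_kernel_at_kernel_at ip_kernel_at_peeled u_def
    by (simp add: ac_simps)
  moreover have "(\<lambda>l. lead n l * (dkernel a (complex_of_real (\<tau> l)) u
      - (\<Sum>j\<in>{1..<n}. row_poly a k j u * pw l j))) \<longlonglongrightarrow> row_poly a k n u"
    using dirichlet_remainder_tendsto[OF C n row] unfolding lead_def pw_def \<tau>_def \<sigma>\<^sub>0_def by simp
  ultimately show ?thesis unfolding u_def by (simp add: LIMSEQ_unique)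
qed

lemma ip_A_A_left:
  assumes j: "j \<in> {1..<n}"
  shows "ip (A n) (A j) = a j n"
proof -
  have bound: "norm (a j p) \<le> (C * real j powr \<sigma>\<^sub>0) * real p powr \<sigma>\<^sub>0" if "p \<ge> 1" for p
    using coeff_bound[of j p] j that by (simp add: ac_simps)
  have "(\<lambda>l. ip (approx n l) (A j)) \<longlonglongrightarrow> ip (A n) (A j)"
    using approx_mem A_n_mem A_below_mem[OF j] approx_tendsto by (rule ip_tendsto_left)
  moreover have "ip (peeled n l) (A j) = (\<Sum>i\<in>{1..<n}. a j i * pw l i)" for l
  proof -
    have "ip (peeled n l) (A j) = (\<Sum>i\<in>{1..<n}. pw l i * ip (A i) (A j))"
      unfolding peeled_def using A_below_mem j by (intro ip_sum_left) auto
    then show ?thesis using ip_A_A_below[OF _ j] by (simp add: ac_simps)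
  qed
  then have "ip (approx n l) (A j) = lead n l * (row_poly a k j (complex_of_real (\<tau> l))
      - (\<Sum>i\<in>{1..<n}. a j i * pw l i))" for l
    unfolding ip_approx_left[OF A_below_mem[OF j]] ip_kernel_at_A_below[OF j] by simp
  moreover have "(\<lambda>l. lead n l * (row_poly a k j (complex_of_real (\<tau> l))
      - (\<Sum>i\<in>{1..<n}. a j i * pw l i))) \<longlonglongrightarrow> a j n"
    using dirichlet_remainder_tendsto[OF bound n row_poly_sums[OF banded]]
    unfolding lead_def pw_def \<tau>_def by simp
  ultimately show ?thesis by (simp add: LIMSEQ_unique)
qed

lemma ip_A_A_right:
  assumes i: "i \<in> {1..n}"
  shows "ip (A i) (A n) = a n i"
proof -
  have i_mem: "A i \<in> H" using i A_below_mem A_n_mem by (cases "i = n") auto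
  have ij: "ip (A i) (A j) = a j i" if "j \<in> {1..<n}" for j
    using i that ip_A_A_below ip_A_A_left by (cases "i = n") auto
  have bound: "norm (a m i) \<le> (C * real i powr \<sigma>\<^sub>0) * real m powr \<sigma>\<^sub>0" if "m \<ge> 1" for m
    using coeff_bound[of m i] i that by (simp add: ac_simps)
  have "(\<lambda>l. ip (A i) (approx n l)) \<longlonglongrightarrow> ip (A i) (A n)"
    using approx_mem A_n_mem i_mem approx_tendsto by (rule ip_tendsto_right)
  moreover have "ip (A i) (approx n l) = lead n l * (col_poly a k i (complex_of_real (\<tau> l))
      - (\<Sum>j\<in>{1..<n}. a j i * pw l j))" for l
    using ip_approx_right[OF i_mem, of l] ip_A_kernel_at[OF i_mem, of l] ip_A_peeled[OF i_mem ij, of l]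
    by simp
  moreover have "(\<lambda>l. lead n l * (col_poly a k i (complex_of_real (\<tau> l))
      - (\<Sum>j\<in>{1..<n}. a j i * pw l j))) \<longlonglongrightarrow> a n i"
    using dirichlet_remainder_tendsto[OF bound n col_poly_sums[OF banded]]
    unfolding lead_def pw_def \<tau>_def by simp
  ultimately show ?thesis by (simp add: LIMSEQ_unique)
qed

lemma symbols_known_Suc: "symbols_known (Suc n)"
  unfolding symbols_known_def
proof (rule conjI; intro ballI)
  have below: "j = n \<or> j \<in> {1..<n}" if "j \<in> {1..<Suc n}" for j using that n by auto
  show "A j \<in> H \<and> (\<forall>q. ip (kernel_at q) (A j) = row_poly a k j (complex_of_real (\<tau> q)))"
    if "j \<in> {1..<Suc n}" for j
    using below[OF that] A_n_mem ip_kernel_at_A A_below_mem ip_kernel_at_A_below by blast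
  show "ip (A i) (A j) = a j i" if "i \<in> {1..<Suc n}" "j \<in> {1..<Suc n}" for i j
  proof (cases "j = n")
    case True
    then show ?thesis using ip_A_A_right[of i] that(1) by simp
  next
    case False
    then have j: "j \<in> {1..<n}" using below[OF that(2)] by blast
    show ?thesis
    proof (cases "i = n")
      case True
      then show ?thesis using ip_A_A_left[OF j] by simp
    next
      case False
      then show ?thesis using ip_A_A_below[OF _ j] below[OF that(1)] by blast
    qed
  qed
qed

end

end

lemma symbols_known: "symbols_known n"
proof (induction n)
  case 0
  show ?case unfolding symbols_known_def by simp
next
  case (Suc n)
  show ?case
  proof (cases "n = 0")
    case True
    then show ?thesis unfolding symbols_known_def by simp
  next
    case False
    obtain C where C: "\<And>m p. m \<ge> 1 \<Longrightarrow> p \<ge> 1 \<Longrightarrow> norm (a m p) \<le> C * real m powr \<sigma>\<^sub>0 * real p powr \<sigma>\<^sub>0"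
      using banded_coeff_bound[OF kernel banded, of "\<sigma>\<^sub>0"] unfolding \<sigma>\<^sub>0_def by auto
    show ?thesis by (rule symbols_known_Suc[OF _ Suc.IH C]) (use False in simp)
  qed
qed

lemma A_mem: "n \<ge> 1 \<Longrightarrow> A n \<in> H"
  using symbols_known[of "Suc n"] unfolding symbols_known_def by auto

lemma ip_A_A: "i \<ge> 1 \<Longrightarrow> j \<ge> 1 \<Longrightarrow> ip (A i) (A j) = a j i"
  using symbols_known[of "Suc (max i j)"] unfolding symbols_known_def by auto


definition kernel_partial_sum :: "complex \<Rightarrow> nat \<Rightarrow> complex \<Rightarrow> complex" where
  "kernel_partial_sum w N = (\<lambda>x. \<Sum>n\<in>{1..N}. cnj (npow n w) * A n x)"

lemma kernel_partial_sum_mem: "kernel_partial_sum w N \<in> H"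
  unfolding kernel_partial_sum_def using A_mem by (intro sum_mem) auto

lemma ip_A_kfun: "w \<in> halfplane \<rho> \<Longrightarrow> n \<ge> 1 \<Longrightarrow> ip (A n) (kfun (halfplane \<rho>) (dkernel a) w) = col_poly a k n w"
  using reproducing[OF _ A_mem, of w n] unfolding A_def by simp

lemma ip_kernel_partial_sum_kfun:
  assumes w: "w \<in> halfplane \<rho>"
  shows "ip (kernel_partial_sum w N) (kfun (halfplane \<rho>) (dkernel a) w) =
    (\<Sum>n=1..N. col_poly a k n w * npow n (cnj w))"
proof -
  have "ip (kernel_partial_sum w N) (kfun (halfplane \<rho>) (dkernel a) w) =
      (\<Sum>n=1..N. cnj (npow n w) * ip (A n) (kfun (halfplane \<rho>) (dkernel a) w))"
    unfolding kernel_partial_sum_def using A_mem kfun_mem[OF w] by (intro ip_sum_left) auto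
  also have "\<dots> = (\<Sum>n=1..N. col_poly a k n w * npow n (cnj w))"
    using ip_A_kfun[OF w] by (intro sum.cong) (auto simp: cnj_npow)
  finally show ?thesis .
qed

lemma ip_kernel_partial_sum_self:
  "ip (kernel_partial_sum w N) (kernel_partial_sum w N) = dpsum a w (cnj w) (N, N)"
proof -
  have "ip (A n) (kernel_partial_sum w N) = (\<Sum>m\<in>{1..N}. npow m w * a m n)" if "n \<ge> 1" for n
  proof -
    have "ip (A n) (kernel_partial_sum w N) = (\<Sum>m\<in>{1..N}. cnj (cnj (npow m w)) * ip (A n) (A m))"
      unfolding kernel_partial_sum_def using A_mem that by (intro ip_sum_right) auto
    also have "\<dots> = (\<Sum>m\<in>{1..N}. npow m w * a m n)"
      using ip_A_A[OF that] by (intro sum.cong) auto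
    finally show ?thesis .
  qed
  moreover have "ip (kernel_partial_sum w N) (kernel_partial_sum w N) =
      (\<Sum>n\<in>{1..N}. cnj (npow n w) * ip (A n) (kernel_partial_sum w N))"
    unfolding kernel_partial_sum_def[of w N]
    using A_mem kernel_partial_sum_mem[unfolded kernel_partial_sum_def]
    by (intro ip_sum_left) auto
  ultimately have "ip (kernel_partial_sum w N) (kernel_partial_sum w N) =
      (\<Sum>n\<in>{1..N}. cnj (npow n w) * (\<Sum>m\<in>{1..N}. npow m w * a m n))"
    by simp
  also have "\<dots> = (\<Sum>m\<in>{1..N}. \<Sum>n\<in>{1..N}. a m n * npow m w * npow n (cnj w))"
    by (subst sum.swap) (simp add: sum_distrib_left cnj_npow ac_simps)
  finally show ?thesis unfolding dpsum_def by simp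
qed

lemma kernel_partial_sum_tendsto:
  assumes w: "w \<in> halfplane \<rho>"
  shows "(\<lambda>N. dist_H (kernel_partial_sum w N) (kfun (halfplane \<rho>) (dkernel a) w)) \<longlonglongrightarrow> 0"
proof -
  define S where "S = kernel_partial_sum w"
  define Kw where "Kw = kfun (halfplane \<rho>) (dkernel a) w"
  define \<kappa> where "\<kappa> = dkernel a w w"
  have Kw_mem: "Kw \<in> H" unfolding Kw_def using kfun_mem w by blast
  have S_mem: "S N \<in> H" for N unfolding S_def by (rule kernel_partial_sum_mem)
  have Kw_Kw: "ip Kw Kw = \<kappa>" using reproducing[OF w Kw_mem] w unfolding Kw_def \<kappa>_def kfun_def by simp
  then have "cnj \<kappa> = \<kappa>" using ip_self_eq_ipnorm[OF Kw_mem] by (metis complex_cnj_complex_of_real)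
  have "(\<lambda>N. ip (S N) (S N)) \<longlonglongrightarrow> \<kappa>"
    unfolding S_def ip_kernel_partial_sum_self \<kappa>_def
    using dkernel_tendsto_along[OF kernel w w filterlim_ident filterlim_ident] by simp
  moreover have S_Kw: "(\<lambda>N. ip (S N) Kw) \<longlonglongrightarrow> \<kappa>"
    unfolding S_def Kw_def ip_kernel_partial_sum_kfun[OF w] \<kappa>_def
    using dkernel_col_expansion[OF kernel banded w w] by (simp add: sums_iff_atLeastAtMost)
  moreover have "(\<lambda>N. ip Kw (S N)) \<longlonglongrightarrow> \<kappa>"
    using tendsto_cnj[OF S_Kw] ip_conj_sym[OF Kw_mem S_mem] \<open>cnj \<kappa> = \<kappa>\<close> by simp
  ultimately have "(\<lambda>N. Re (ip (S N) (S N) - ip (S N) Kw - ip Kw (S N) + ip Kw Kw))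
      \<longlonglongrightarrow> Re (\<kappa> - \<kappa> - \<kappa> + \<kappa>)"
    unfolding Kw_Kw by (intro tendsto_intros)
  then show ?thesis
    unfolding S_def[symmetric] Kw_def[symmetric] using S_mem Kw_mem by (intro dist_H_tendsto_0I) simp_all
qed

lemma A_total:
  assumes f: "f \<in> H" and orth: "\<forall>n. ip f (A (Suc n)) = 0"
  shows "f = (\<lambda>x. 0)"
proof
  fix w
  show "f w = 0"
  proof (cases "w \<in> halfplane \<rho>")
    case True
    have "ip f (A n) = 0" if "n \<ge> 1" for n using orth[rule_format, of "n - 1"] that by simp
    then have "ip f (kernel_partial_sum w N) = (\<Sum>n\<in>{1..N}. cnj (cnj (npow n w)) * 0)" for N
      unfolding kernel_partial_sum_def using A_mem f by (subst ip_sum_right) (auto intro: sum.cong)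
    then have "(\<lambda>N. 0) \<longlonglongrightarrow> ip f (kfun (halfplane \<rho>) (dkernel a) w)"
      using ip_tendsto_right[OF kernel_partial_sum_mem kfun_mem[OF True] f kernel_partial_sum_tendsto[OF True]]
      by simp
    then show ?thesis using reproducing[OF True f] by (simp add: LIMSEQ_const_iff)
  next
    case False
    then show ?thesis by (rule vanishes_outside[OF f])
  qed
qed

theorem dirichlet_orthonormal_basis:
  obtains B where "orthonormal_basis H ip B" "\<And>e. e \<in> B \<Longrightarrow> dirichlet_poly_on (halfplane \<rho>) e"
proof -
  interpret gram_schmidt "halfplane \<rho>" H ip "dkernel a" "\<lambda>n. A (Suc n)"
    by unfold_locales (simp add: A_mem)
  have dp: "dirichlet_poly_on (halfplane \<rho>) (gs j)" for j
  proof (rule gs_closed)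
    show "dirichlet_poly_on (halfplane \<rho>) (\<lambda>x. 0)" by (rule dirichlet_poly_on_zero)
    show "dirichlet_poly_on (halfplane \<rho>) (\<lambda>x. f x + g x)"
      if "dirichlet_poly_on (halfplane \<rho>) f" "dirichlet_poly_on (halfplane \<rho>) g" for f g
      using that by (rule dirichlet_poly_on_add)
    show "dirichlet_poly_on (halfplane \<rho>) (\<lambda>x. c * f x)" if "dirichlet_poly_on (halfplane \<rho>) f" for f c
      using that by (rule dirichlet_poly_on_scale)
    show "dirichlet_poly_on (halfplane \<rho>) (A (Suc n))" for n
      using dirichlet_poly_on_col_poly[of "halfplane \<rho>" a k "Suc n"]
      unfolding A_def dirichlet_poly_on_def by simp
  qed
  show ?thesis
    by (rule that[OF gs_orthonormal_basis[OF A_total]]) (use dp in auto)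
qed

lemma dirichlet_polys_dense:
  assumes f: "f \<in> H" and \<epsilon>: "\<epsilon> > 0"
  shows "\<exists>p\<in>H. dirichlet_poly_on (halfplane \<rho>) p \<and> dist_H f p < \<epsilon>"
proof -
  obtain B where B: "orthonormal_basis H ip B" "\<And>e. e \<in> B \<Longrightarrow> dirichlet_poly_on (halfplane \<rho>) e"
    by (rule dirichlet_orthonormal_basis) blast
  then obtain g where "g \<in> fspan B" "dist_H f g < \<epsilon>"
    using f \<epsilon> unfolding orthonormal_basis_def by blast
  moreover have "B \<subseteq> H" using B(1) unfolding orthonormal_basis_def by blast
  ultimately show ?thesis using fspan_mem dirichlet_poly_on_fspan[OF B(2)] by blast
qed

end

theorem proposition3p1:
  fixes k :: nat and \<rho> :: real and a :: "nat \<Rightarrow> nat \<Rightarrow> complex"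
  assumes "dirichlet_series_kernel \<rho> a"
    and "k_diagonal k a"
    and "psd_kernel (halfplane \<rho>) (dkernel a)"
  shows "(\<forall>n\<ge>1. dirichlet_poly_on (halfplane \<rho>) (symbol a n)) \<and>
         (\<forall>H ip. rkhs (halfplane \<rho>) H ip (dkernel a) \<longrightarrow>
            (\<exists>B. orthonormal_basis H ip B \<and> (\<forall>e\<in>B. dirichlet_poly_on (halfplane \<rho>) e)) \<and>
            ((\<forall>N (c::nat \<Rightarrow> complex).
                (\<lambda>s. if s \<in> halfplane \<rho> then \<Sum>n=1..N. c n * npow n s else 0) \<in> H) \<longrightarrow>
             (\<forall>f\<in>H. \<forall>\<epsilon>>0. \<exists>p\<in>H. dirichlet_poly_on (halfplane \<rho>) p \<and> ipnorm ip (\<lambda>x. f x - p x) < \<epsilon>)))"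
proof -
  have "symbol a n = col_poly a k n" for n
    by (intro ext symbol_eq_col_poly[OF assms(2)])
  then have "\<forall>n\<ge>1. dirichlet_poly_on (halfplane \<rho>) (symbol a n)"
    by (simp add: dirichlet_poly_on_col_poly)
  moreover have "(\<exists>B. orthonormal_basis H ip B \<and> (\<forall>e\<in>B. dirichlet_poly_on (halfplane \<rho>) e)) \<and>
      (\<forall>f\<in>H. \<forall>\<epsilon>>0. \<exists>p\<in>H. dirichlet_poly_on (halfplane \<rho>) p \<and> ipnorm ip (\<lambda>x. f x - p x) < \<epsilon>)"
    if "rkhs (halfplane \<rho>) H ip (dkernel a)" for H ip
  proof -
    interpret banded_dirichlet_rkhs \<rho> H ip a k
      using that assms(1,2) by unfold_locales
    obtain B where "orthonormal_basis H ip B" "\<And>e. e \<in> B \<Longrightarrow> dirichlet_poly_on (halfplane \<rho>) e"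
      by (rule dirichlet_orthonormal_basis) blast
    then show ?thesis using dirichlet_polys_dense by blast
  qed
  ultimately show ?thesis by blast
qed

end
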